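(* Let $W$ be a Coxeter group, $w\in W$, $J\subseteq S$, and suppose $w=w^Jw_J$ is a Billey--Postnikov decomposition with $\supp(w^J)\cap\supp(w_J)=\{s\}$ for some $s\in S$. Then the middle multiplication map $\phi:x\mapsto x^J\,s\,x_J$ is a special matching of (the Hasse diagram of) the Bruhat interval $[e,w]$.
   Context: $(W,S)$ is a Coxeter system with length $\ell$, Bruhat order $\le$, identity $e$. For $J\subseteq S$, each $x$ factors uniquely as $x=x^Jx_J$ with $x_J\in W_J=\langle J\rangle$ and $x^J$ the minimal-length element of $xW_J$. $\supp(x)$ is the set of simple generators in a reduced word of $x$, $D_L(x)=\{s\in S:\ell(sx)<\ell(x)\}$. $w=w^Jw_J$ is a BP-decomposition if $\supp(w^J)\cap J\subseteq D_L(w_J)$. The Hasse diagram of a poset $P$ is the graph on $P$ whose edges are cover relations $x\lessdot y$; a perfect matching is a fixed-point-free involution $M$ with each $\{x,M(x)\}$ an edge; it is a special matching if for every cover $x\lessdot y$ either $M(x)=y$ or $M(x)<M(y)$. *)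

theory Defs
  imports "HOL-Algebra.Group"
begin

definition wprod :: "('a, 'b) monoid_scheme \<Rightarrow> 'a list \<Rightarrow> 'a" where
  "wprod G u = foldr (\<lambda>a b. a \<otimes>\<^bsub>G\<^esub> b) u \<one>\<^bsub>G\<^esub>"

text \<open>Relators of the Coxeter presentation: the words (s t)^n with (st)^n = 1 in G
  (for s = t, n = 1 this gives s s).  These generate the same normal subgroup as the
  relators (s t)^(m(s,t)), m(s,t) the order of st.\<close>
definition cox_relators :: "('a, 'b) monoid_scheme \<Rightarrow> 'a set \<Rightarrow> 'a list set" where
  "cox_relators G S = {concat (replicate n [s, t]) | s t n.
       s \<in> S \<and> t \<in> S \<and> (s \<otimes>\<^bsub>G\<^esub> t) [^]\<^bsub>G\<^esub> (n::nat) = \<one>\<^bsub>G\<^esub>}"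

inductive word_cong :: "'a list set \<Rightarrow> 'a list \<Rightarrow> 'a list \<Rightarrow> bool" for R where
  wc_refl: "word_cong R u u"
| wc_sym: "word_cong R u v \<Longrightarrow> word_cong R v u"
| wc_trans: "word_cong R u v \<Longrightarrow> word_cong R v x \<Longrightarrow> word_cong R u x"
| wc_del: "r \<in> R \<Longrightarrow> word_cong R (u @ r @ v) (u @ v)"

text \<open>(G,S) is a Coxeter system: S is a generating set of involutions of G and G has the
  presentation with generators S and relations s^2 = 1, (st)^{m(s,t)} = 1, i.e. two words
  in S have the same product exactly when they are congruent modulo these relations.\<close>
definition coxeter_system :: "('a, 'b) monoid_scheme \<Rightarrow> 'a set \<Rightarrow> bool" where
  "coxeter_system G S \<longleftrightarrow> group G \<and> S \<subseteq> carrier G \<and> \<one>\<^bsub>G\<^esub> \<notin> S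
     \<and> (\<forall>s\<in>S. s \<otimes>\<^bsub>G\<^esub> s = \<one>\<^bsub>G\<^esub>)
     \<and> carrier G = {wprod G u | u. u \<in> lists S}
     \<and> (\<forall>u\<in>lists S. \<forall>v\<in>lists S. wprod G u = wprod G v \<longrightarrow> word_cong (cox_relators G S) u v)"

definition clen :: "('a, 'b) monoid_scheme \<Rightarrow> 'a set \<Rightarrow> 'a \<Rightarrow> nat" where
  "clen G S w = (LEAST n. \<exists>u\<in>lists S. length u = n \<and> wprod G u = w)"

definition reduced_word :: "('a, 'b) monoid_scheme \<Rightarrow> 'a set \<Rightarrow> 'a list \<Rightarrow> 'a \<Rightarrow> bool" where
  "reduced_word G S u w \<longleftrightarrow> u \<in> lists S \<and> wprod G u = w \<and> length u = clen G S w"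

definition supp :: "('a, 'b) monoid_scheme \<Rightarrow> 'a set \<Rightarrow> 'a \<Rightarrow> 'a set" where
  "supp G S w = set (SOME u. reduced_word G S u w)"

definition left_descents :: "('a, 'b) monoid_scheme \<Rightarrow> 'a set \<Rightarrow> 'a \<Rightarrow> 'a set" where
  "left_descents G S w = {s \<in> S. clen G S (s \<otimes>\<^bsub>G\<^esub> w) < clen G S w}"

definition reflections :: "('a, 'b) monoid_scheme \<Rightarrow> 'a set \<Rightarrow> 'a set" where
  "reflections G S = {g \<otimes>\<^bsub>G\<^esub> s \<otimes>\<^bsub>G\<^esub> inv\<^bsub>G\<^esub> g | g s. g \<in> carrier G \<and> s \<in> S}"

definition bruhat_step :: "('a, 'b) monoid_scheme \<Rightarrow> 'a set \<Rightarrow> 'a \<Rightarrow> 'a \<Rightarrow> bool" where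
  "bruhat_step G S u w \<longleftrightarrow> u \<in> carrier G \<and>
     (\<exists>t\<in>reflections G S. w = u \<otimes>\<^bsub>G\<^esub> t) \<and> clen G S u < clen G S w"

definition bruhat_le :: "('a, 'b) monoid_scheme \<Rightarrow> 'a set \<Rightarrow> 'a \<Rightarrow> 'a \<Rightarrow> bool" where
  "bruhat_le G S u w \<longleftrightarrow> u \<in> carrier G \<and> w \<in> carrier G \<and> (bruhat_step G S)\<^sup>*\<^sup>* u w"

definition bruhat_interval :: "('a, 'b) monoid_scheme \<Rightarrow> 'a set \<Rightarrow> 'a \<Rightarrow> 'a \<Rightarrow> 'a set" where
  "bruhat_interval G S u w = {x. bruhat_le G S u x \<and> bruhat_le G S x w}"

definition parabolic :: "('a, 'b) monoid_scheme \<Rightarrow> 'a set \<Rightarrow> 'a set" where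
  "parabolic G J = {wprod G u | u. u \<in> lists J}"

definition par_min :: "('a, 'b) monoid_scheme \<Rightarrow> 'a set \<Rightarrow> 'a set \<Rightarrow> 'a \<Rightarrow> 'a" where
  "par_min G S J x = (THE y. y \<in> {x \<otimes>\<^bsub>G\<^esub> v | v. v \<in> parabolic G J} \<and>
      (\<forall>z \<in> {x \<otimes>\<^bsub>G\<^esub> v | v. v \<in> parabolic G J}. z \<noteq> y \<longrightarrow> clen G S y < clen G S z))"

definition par_comp :: "('a, 'b) monoid_scheme \<Rightarrow> 'a set \<Rightarrow> 'a set \<Rightarrow> 'a \<Rightarrow> 'a" where
  "par_comp G S J x = inv\<^bsub>G\<^esub> (par_min G S J x) \<otimes>\<^bsub>G\<^esub> x"

definition BP_decomposition :: "('a, 'b) monoid_scheme \<Rightarrow> 'a set \<Rightarrow> 'a set \<Rightarrow> 'a \<Rightarrow> bool" where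
  "BP_decomposition G S J w \<longleftrightarrow>
     supp G S (par_min G S J w) \<inter> J \<subseteq> left_descents G S (par_comp G S J w)"

definition covers_in :: "('a \<Rightarrow> 'a \<Rightarrow> bool) \<Rightarrow> 'a set \<Rightarrow> 'a \<Rightarrow> 'a \<Rightarrow> bool" where
  "covers_in leq P x y \<longleftrightarrow> x \<in> P \<and> y \<in> P \<and> leq x y \<and> x \<noteq> y \<and>
     \<not> (\<exists>z\<in>P. leq x z \<and> leq z y \<and> z \<noteq> x \<and> z \<noteq> y)"

definition perfect_matching :: "('a \<Rightarrow> 'a \<Rightarrow> bool) \<Rightarrow> 'a set \<Rightarrow> ('a \<Rightarrow> 'a) \<Rightarrow> bool" where
  "perfect_matching leq P M \<longleftrightarrow>
     (\<forall>x\<in>P. M x \<in> P \<and> M (M x) = x \<and> M x \<noteq> x \<and>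
             (covers_in leq P x (M x) \<or> covers_in leq P (M x) x))"

definition special_matching :: "('a \<Rightarrow> 'a \<Rightarrow> bool) \<Rightarrow> 'a set \<Rightarrow> ('a \<Rightarrow> 'a) \<Rightarrow> bool" where
  "special_matching leq P M \<longleftrightarrow> perfect_matching leq P M \<and>
     (\<forall>x y. covers_in leq P x y \<longrightarrow> M x = y \<or> (leq (M x) (M y) \<and> M x \<noteq> M y))"

end

theory Submission
  imports Defs "HOL-Library.Sublist"
begin

text \<open>
  The parity of the number of
  times a reflection \<open>t\<close> occurs in the reflection sequence of a word is unchanged by deleting a
  relator \<open>(ab)\<^sup>n\<close>, which runs through each of its reflections an even number of times. Hence
  it is a function of the group element, and it holds exactly when \<open>\<ell>(t w) < \<ell>(w)\<close>. This
  gives the strong exchange property, and from it the subword and lifting properties of Bruhat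
  order and the additivity \<open>\<ell>(x\<^sup>J v) = \<ell>(x\<^sup>J) + \<ell>(v)\<close> for \<open>v \<in> W\<^sub>J\<close>.

  Write \<open>A = w\<^sup>J\<close> and \<open>B = w\<^sub>J\<close>. By the BP condition every \<open>r \<in> supp(A) \<inter> J\<close> is a left
  descent of \<open>B\<close>, hence lies in \<open>supp(A) \<inter> supp(B) = {s}\<close>; so the only elements of \<open>W\<^sub>J\<close>
  below \<open>A\<close> are \<open>1\<close> and \<open>s\<close>. Splitting \<open>x \<le> y\<close> by the subword property as \<open>x = c' d'\<close>
  with \<open>c' \<le> y\<^sup>J\<close> and \<open>d' \<le> y\<^sub>J\<close>, the \<open>W\<^sub>J\<close>-part of \<open>c'\<close> is therefore \<open>1\<close> or \<open>s\<close>. For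
  \<open>y = w\<close> this gives \<open>x\<^sup>J \<le> A\<close> and \<open>x\<^sub>J \<le> B\<close> (lifting by the descent \<open>s\<close> of \<open>B\<close>), so
  \<open>\<phi>\<close>, which multiplies \<open>x\<^sub>J\<close> on the left by \<open>s\<close>, maps \<open>[e, w]\<close> to itself and changes
  length by one. For a cover \<open>x < y\<close>, either \<open>x\<^sup>J = y\<^sup>J\<close> and the special matching condition
  reduces to the lifting property of left multiplication by \<open>s\<close> inside \<open>W\<^sub>J\<close>, or
  \<open>x\<^sup>J \<noteq> y\<^sup>J\<close> and the condition follows because no element \<open>x\<^sup>J u\<close> with \<open>u \<in> W\<^sub>J\<close> can lie
  strictly between \<open>x\<close> and \<open>y\<close>.
\<close>

section \<open>Words and length\<close>

locale coxeter =
  fixes G (structure) and S :: "'a set"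
  assumes coxeter_system: "coxeter_system G S"
begin

sublocale group G
  using coxeter_system unfolding coxeter_system_def by auto

lemma inv_mult_cancel_left [simp]: "x \<in> carrier G \<Longrightarrow> y \<in> carrier G \<Longrightarrow> inv x \<otimes> (x \<otimes> y) = y"
  by (simp add: m_assoc[symmetric])

lemma mult_inv_cancel_left [simp]: "x \<in> carrier G \<Longrightarrow> y \<in> carrier G \<Longrightarrow> x \<otimes> (inv x \<otimes> y) = y"
  by (simp add: m_assoc[symmetric])

abbreviation len :: "'a \<Rightarrow> nat" ("\<ell>") where "\<ell> \<equiv> clen G S"

abbreviation reduced :: "'a list \<Rightarrow> bool" where "reduced q \<equiv> reduced_word G S q (wprod G q)"

lemma gen_closed [simp]: "s \<in> S \<Longrightarrow> s \<in> carrier G"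
  using coxeter_system unfolding coxeter_system_def by auto

lemma one_not_gen: "\<one> \<notin> S"
  using coxeter_system unfolding coxeter_system_def by auto

lemma gen_square: "s \<in> S \<Longrightarrow> s \<otimes> s = \<one>"
  using coxeter_system unfolding coxeter_system_def by auto

lemma gen_inv: "s \<in> S \<Longrightarrow> inv s = s"
  using gen_square by (simp add: inv_equality)

lemma gen_gen_mult: "s \<in> S \<Longrightarrow> x \<in> carrier G \<Longrightarrow> s \<otimes> (s \<otimes> x) = x"
  using gen_square by (simp add: m_assoc[symmetric])

lemma word_exists: "x \<in> carrier G \<Longrightarrow> \<exists>u\<in>lists S. wprod G u = x"
  using coxeter_system unfolding coxeter_system_def by auto

lemma word_cong_if_wprod_eq:
  "u \<in> lists S \<Longrightarrow> v \<in> lists S \<Longrightarrow> wprod G u = wprod G v \<Longrightarrow> word_cong (cox_relators G S) u v"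
  using coxeter_system unfolding coxeter_system_def by auto

lemma wprod_Nil [simp]: "wprod G [] = \<one>"
  by (simp add: wprod_def)

lemma wprod_Cons [simp]: "wprod G (a # u) = a \<otimes> wprod G u"
  by (simp add: wprod_def)

lemma wprod_closed [simp]: "u \<in> lists S \<Longrightarrow> wprod G u \<in> carrier G"
  by (induction u) auto

lemma wprod_append: "u \<in> lists S \<Longrightarrow> v \<in> lists S \<Longrightarrow> wprod G (u @ v) = wprod G u \<otimes> wprod G v"
  by (induction u) (auto simp: m_assoc)

lemma wprod_rev: "u \<in> lists S \<Longrightarrow> wprod G (rev u) = inv (wprod G u)"
proof (induction u)
  case (Cons a u)
  then have "rev u \<in> lists S" "a \<in> S"
    by auto
  then have "wprod G (rev (a # u)) = inv (wprod G u) \<otimes> a"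
    using Cons wprod_append[of "rev u" "[a]"] by simp
  also have "\<dots> = inv (a \<otimes> wprod G u)"
    using Cons.prems gen_inv by (simp add: inv_mult_group)
  finally show ?case by simp
qed simp

lemma length_le_word: "u \<in> lists S \<Longrightarrow> \<ell> (wprod G u) \<le> length u"
  unfolding clen_def by (rule Least_le) auto

lemma reduced_word_exists: "x \<in> carrier G \<Longrightarrow> \<exists>u. reduced_word G S u x"
proof -
  assume "x \<in> carrier G"
  then have "\<exists>n. \<exists>u\<in>lists S. length u = n \<and> wprod G u = x"
    using word_exists by blast
  from LeastI_ex[OF this] show ?thesis
    unfolding reduced_word_def clen_def by blast
qed

lemma length_mult_le: "x \<in> carrier G \<Longrightarrow> y \<in> carrier G \<Longrightarrow> \<ell> (x \<otimes> y) \<le> \<ell> x + \<ell> y"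
proof -
  assume "x \<in> carrier G" "y \<in> carrier G"
  then obtain u v where "reduced_word G S u x" "reduced_word G S v y"
    using reduced_word_exists by meson
  then show ?thesis
    using length_le_word[of "u @ v"] unfolding reduced_word_def by (simp add: wprod_append)
qed

lemma length_one [simp]: "\<ell> \<one> = 0"
  using length_le_word[of "[]"] by simp

lemma length_eq_0_iff: "x \<in> carrier G \<Longrightarrow> \<ell> x = 0 \<longleftrightarrow> x = \<one>"
  using reduced_word_exists unfolding reduced_word_def by fastforce

lemma length_gen: "s \<in> S \<Longrightarrow> \<ell> s = 1"
  using length_le_word[of "[s]"] length_eq_0_iff[of s] one_not_gen by fastforce

lemma length_gen_mult_le: "s \<in> S \<Longrightarrow> x \<in> carrier G \<Longrightarrow> \<ell> (s \<otimes> x) \<le> \<ell> x + 1"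
  using length_mult_le[of s x] length_gen[of s] by simp

lemma length_le_gen_mult: "s \<in> S \<Longrightarrow> x \<in> carrier G \<Longrightarrow> \<ell> x \<le> \<ell> (s \<otimes> x) + 1"
  using length_gen_mult_le[of s "s \<otimes> x"] gen_gen_mult by simp

lemma reduced_Cons_reduced: "reduced (r # q) \<Longrightarrow> reduced q"
  using length_gen_mult_le[of r "wprod G q"] length_le_word[of q]
  unfolding reduced_word_def by simp

lemma reduced_appendD: assumes "reduced (p @ q)" shows "reduced p" "reduced q"
proof -
  have "\<ell> (wprod G (p @ q)) \<le> \<ell> (wprod G p) + \<ell> (wprod G q)"
    using assms length_mult_le unfolding reduced_word_def by (simp add: wprod_append)
  then show "reduced p" "reduced q"
    using assms length_le_word[of p] length_le_word[of q] unfolding reduced_word_def by auto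
qed

lemma reduced_exists: "x \<in> carrier G \<Longrightarrow> \<exists>q. reduced q \<and> wprod G q = x"
  using reduced_word_exists unfolding reduced_word_def by metis

lemma reduced_append:
  "reduced p \<Longrightarrow> reduced q \<Longrightarrow> \<ell> (wprod G p \<otimes> wprod G q) = \<ell> (wprod G p) + \<ell> (wprod G q)
    \<Longrightarrow> reduced (p @ q)"
  unfolding reduced_word_def by (simp add: wprod_append)

section \<open>Reflection sequences and the strong exchange property\<close>

definition cnj :: "'a \<Rightarrow> 'a \<Rightarrow> 'a" where "cnj g t = g \<otimes> t \<otimes> inv g"

lemma cnj_closed [simp]: "g \<in> carrier G \<Longrightarrow> t \<in> carrier G \<Longrightarrow> cnj g t \<in> carrier G"
  by (simp add: cnj_def)

lemma cnj_cnj: "g \<in> carrier G \<Longrightarrow> h \<in> carrier G \<Longrightarrow> t \<in> carrier G \<Longrightarrow> cnj g (cnj h t) = cnj (g \<otimes> h) t"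
  by (simp add: cnj_def m_assoc inv_mult_group)

lemma cnj_one [simp]: "t \<in> carrier G \<Longrightarrow> cnj \<one> t = t"
  by (simp add: cnj_def)

lemma cnj_eq_iff:
  assumes "g \<in> carrier G" "t \<in> carrier G" "x \<in> carrier G"
  shows "cnj g x = t \<longleftrightarrow> x = cnj (inv g) t"
  using assms cnj_cnj[of g "inv g" t] cnj_cnj[of "inv g" g x] by auto

lemma count_map_cnj:
  "set xs \<subseteq> carrier G \<Longrightarrow> g \<in> carrier G \<Longrightarrow> t \<in> carrier G \<Longrightarrow>
    count_list (map (cnj g) xs) t = count_list xs (cnj (inv g) t)"
  by (induction xs) (auto simp: cnj_eq_iff)

lemma map_cnj_one: "set xs \<subseteq> carrier G \<Longrightarrow> map (cnj \<one>) xs = xs"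
  by (induction xs) auto

lemma map_cnj_cnj:
  "set xs \<subseteq> carrier G \<Longrightarrow> g \<in> carrier G \<Longrightarrow> h \<in> carrier G \<Longrightarrow>
    map (cnj g) (map (cnj h) xs) = map (cnj (g \<otimes> h)) xs"
  by (induction xs) (auto simp: cnj_cnj)

fun refl_seq :: "'a list \<Rightarrow> 'a list" where
  "refl_seq [] = []"
| "refl_seq (r # q) = r # map (cnj r) (refl_seq q)"

lemma length_refl_seq [simp]: "length (refl_seq q) = length q"
  by (induction q) auto

lemma refl_seq_closed: "q \<in> lists S \<Longrightarrow> set (refl_seq q) \<subseteq> carrier G"
  by (induction q) auto

lemma refl_seq_append:
  "p \<in> lists S \<Longrightarrow> q \<in> lists S \<Longrightarrow> refl_seq (p @ q) = refl_seq p @ map (cnj (wprod G p)) (refl_seq q)"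
proof (induction p)
  case (Cons r p)
  then show ?case
    using map_cnj_cnj[OF refl_seq_closed[of q], of r "wprod G p"] by simp
qed (simp add: map_cnj_one refl_seq_closed)

lemma refl_seq_nth:
  "q \<in> lists S \<Longrightarrow> i < length q \<Longrightarrow> refl_seq q ! i = cnj (wprod G (take i q)) (q ! i)"
proof (induction q arbitrary: i)
  case (Cons r q)
  show ?case
  proof (cases i)
    case (Suc j)
    then have "j < length q" "q ! j \<in> S" "take j q \<in> lists S"
      using Cons.prems by (auto dest: in_set_takeD)
    then show ?thesis
      using Cons Suc by (simp add: cnj_cnj)
  qed (use Cons.prems in \<open>simp add: cnj_def gen_inv\<close>)
qed simp

definition del_nth :: "nat \<Rightarrow> 'a list \<Rightarrow> 'a list" where
  "del_nth i q = take i q @ drop (Suc i) q"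

lemma del_nth_lists: "q \<in> lists S \<Longrightarrow> del_nth i q \<in> lists S"
  unfolding del_nth_def by (auto dest: in_set_takeD in_set_dropD)

lemma length_del_nth: "i < length q \<Longrightarrow> length (del_nth i q) = length q - 1"
  unfolding del_nth_def by simp

lemma del_nth_append1: "i < length p \<Longrightarrow> del_nth i (p @ q) = del_nth i p @ q"
  unfolding del_nth_def by simp

lemma del_nth_append2: "length p \<le> i \<Longrightarrow> del_nth i (p @ q) = p @ del_nth (i - length p) q"
  unfolding del_nth_def by (simp add: Suc_diff_le)

lemma subseq_del_nth: "subseq (del_nth i q) q"
proof -
  have "subseq (drop (Suc i) q) (drop i q)"
    by (cases "drop i q") (auto simp: drop_Suc drop_tl)
  then show ?thesis
    unfolding del_nth_def by (metis append_take_drop_id list_emb_append_mono subseq_order.refl)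
qed

lemma subseq_lists: "subseq p q \<Longrightarrow> q \<in> lists A \<Longrightarrow> p \<in> lists A"
  by (induction rule: list_emb.induct) auto

lemma refl_seq_nth_mult:
  assumes q: "q \<in> lists S" and i: "i < length q"
  shows "refl_seq q ! i \<otimes> wprod G q = wprod G (del_nth i q)"
proof -
  let ?P = "wprod G (take i q)" and ?s = "q ! i" and ?R = "wprod G (drop (Suc i) q)"
  have lists: "take i q \<in> lists S" "drop (Suc i) q \<in> lists S" "?s \<in> S"
    using q i by (auto dest: in_set_takeD in_set_dropD)
  then have carrier: "?P \<in> carrier G" "?R \<in> carrier G" "?s \<in> carrier G"
    by auto
  have "q = take i q @ ?s # drop (Suc i) q"
    using i by (simp add: Cons_nth_drop_Suc)
  then have "wprod G q = ?P \<otimes> (?s \<otimes> ?R)"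
    using lists wprod_append[of "take i q" "?s # drop (Suc i) q"] by auto
  then have "refl_seq q ! i \<otimes> wprod G q = (?P \<otimes> ?s \<otimes> inv ?P) \<otimes> (?P \<otimes> (?s \<otimes> ?R))"
    using refl_seq_nth[OF q i] by (simp add: cnj_def)
  also have "\<dots> = ?P \<otimes> (?s \<otimes> ?s) \<otimes> ?R"
    using carrier by (simp add: m_assoc)
  also have "\<dots> = wprod G (del_nth i q)"
    using lists gen_square unfolding del_nth_def by (simp add: wprod_append)
  finally show ?thesis .
qed

definition word_parity :: "'a list \<Rightarrow> 'a \<Rightarrow> bool" where
  "word_parity q t \<longleftrightarrow> odd (count_list (refl_seq q) t)"

lemma word_parity_Nil [simp]: "\<not> word_parity [] t"
  by (simp add: word_parity_def)

lemma word_parity_gen: "word_parity [s] t \<longleftrightarrow> t = s"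
  by (simp add: word_parity_def)

lemma word_parity_append:
  assumes "p \<in> lists S" "q \<in> lists S" "t \<in> carrier G"
  shows "word_parity (p @ q) t \<longleftrightarrow> word_parity p t \<noteq> word_parity q (cnj (inv (wprod G p)) t)"
  using assms refl_seq_append[of p q] count_map_cnj[OF refl_seq_closed[of q], of "wprod G p" t]
  unfolding word_parity_def by simp

lemma gen_mult_inv_pow:
  assumes "a \<in> S" "b \<in> S"
  shows "a \<otimes> inv ((a \<otimes> b) [^] (j::nat)) = (a \<otimes> b) [^] j \<otimes> a"
proof (induction j)
  case (Suc j)
  let ?g = "a \<otimes> b"
  have "a \<otimes> inv (?g [^] Suc j) = (a \<otimes> inv ?g) \<otimes> inv (?g [^] j)"
    using assms by (simp add: inv_mult_group m_assoc)
  also have "a \<otimes> inv ?g = ?g \<otimes> a"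
    using assms gen_inv gen_square by (simp add: inv_mult_group m_assoc[symmetric])
  also have "?g \<otimes> a \<otimes> inv (?g [^] j) = ?g \<otimes> (?g [^] j \<otimes> a)"
    using assms Suc by (simp add: m_assoc)
  also have "\<dots> = ?g [^] Suc j \<otimes> a"
    using assms nat_pow_Suc2[of ?g j] by (simp add: m_assoc del: nat_pow_Suc)
  finally show ?case .
qed (use assms in simp)

lemma relator_word_lists: "a \<in> S \<Longrightarrow> b \<in> S \<Longrightarrow> concat (replicate j [a, b]) \<in> lists S"
  by (induction j) auto

lemma wprod_relator_word:
  assumes "a \<in> S" "b \<in> S"
  shows "wprod G (concat (replicate j [a, b])) = (a \<otimes> b) [^] j"
proof (induction j)
  case (Suc j)
  then show ?case
    using assms nat_pow_Suc2[of "a \<otimes> b" j] by (simp add: m_assoc del: nat_pow_Suc)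
qed simp

lemma refl_seq_relator_word:
  assumes a: "a \<in> S" and b: "b \<in> S"
  shows "refl_seq (concat (replicate j [a, b])) = map (\<lambda>k. (a \<otimes> b) [^] k \<otimes> a) [0..<2*j]"
proof (induction j)
  case (Suc j)
  let ?g = "a \<otimes> b" and ?X = "concat (replicate j [a, b])"
  have "concat (replicate (Suc j) [a, b]) = ?X @ [a, b]"
    by (simp add: replicate_append_same[symmetric])
  then have "refl_seq (concat (replicate (Suc j) [a, b])) = refl_seq ?X @ map (cnj (?g [^] j)) [a, cnj a b]"
    using refl_seq_append[OF relator_word_lists[OF a b], of "[a, b]"] wprod_relator_word[OF a b] a b
    by simp
  moreover have "cnj (?g [^] j) a = ?g [^] (2*j) \<otimes> a"
    using a b gen_mult_inv_pow[OF a b, of j]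
    by (simp add: cnj_def m_assoc nat_pow_mult[symmetric] mult_2 del: nat_pow_Suc)
  moreover have "cnj (?g [^] j) (cnj a b) = ?g [^] (2*j+1) \<otimes> a"
  proof -
    have "cnj (?g [^] j) (cnj a b) = ?g [^] j \<otimes> ?g \<otimes> (?g [^] j \<otimes> a)"
      using a b gen_inv[OF a] gen_mult_inv_pow[OF a b, of j] by (simp add: cnj_def m_assoc)
    also have "\<dots> = (?g [^] Suc j \<otimes> ?g [^] j) \<otimes> a"
      using a b by (simp add: m_assoc)
    also have "\<dots> = ?g [^] (Suc j + j) \<otimes> a"
      using a b by (simp only: nat_pow_mult m_closed gen_closed)
    finally show ?thesis by (simp add: mult_2)
  qed
  ultimately show ?case
    using Suc by simp
qed simp

lemma count_list_periodic:
  assumes "\<And>k. f (k + n) = f k"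
  shows "count_list (map f [0..<2*n]) t = 2 * count_list (map f [0..<n]) t"
proof -
  have "[0..<2*n] = [0..<n] @ map (\<lambda>i. i + n) [0..<n]"
    using upt_add_eq_append[of 0 n n] map_add_upt[of n n] by (simp add: mult_2)
  then show ?thesis
    using assms by (simp add: comp_def)
qed

lemma relator_word_parity:
  assumes "r \<in> cox_relators G S"
  shows "r \<in> lists S \<and> wprod G r = \<one> \<and> (\<forall>t. \<not> word_parity r t)"
proof -
  obtain a b n where ab: "a \<in> S" "b \<in> S" "(a \<otimes> b) [^] (n::nat) = \<one>"
    and r: "r = concat (replicate n [a, b])"
    using assms unfolding cox_relators_def by blast
  have "(a \<otimes> b) [^] (k + n) \<otimes> a = (a \<otimes> b) [^] k \<otimes> a" for k
    using ab by (simp add: nat_pow_mult[symmetric])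
  then have "\<not> word_parity r t" for t
    unfolding word_parity_def r refl_seq_relator_word[OF ab(1,2)]
    by (subst count_list_periodic) auto
  then show ?thesis
    using relator_word_lists[OF ab(1,2)] wprod_relator_word[OF ab(1,2)] ab(3) r by simp
qed

lemma word_cong_word_parity:
  "word_cong (cox_relators G S) u v \<Longrightarrow>
    (u \<in> lists S \<longleftrightarrow> v \<in> lists S) \<and> (u \<in> lists S \<longrightarrow> (\<forall>t\<in>carrier G. word_parity u t = word_parity v t))"
proof (induction rule: word_cong.induct)
  case (wc_del r u v)
  have r: "r \<in> lists S" "wprod G r = \<one>" "\<And>t. \<not> word_parity r t"
    using relator_word_parity[OF wc_del] by auto
  have "word_parity (u @ r @ v) t = word_parity (u @ v) t" if "u \<in> lists S" "v \<in> lists S" "t \<in> carrier G" for t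
    using that r word_parity_append[of u "r @ v" t] word_parity_append[of u v t]
      word_parity_append[of r v "cnj (inv (wprod G u)) t"] by simp
  then show ?case
    using r by auto
qed auto

text \<open>The choice of the word is irrelevant, see \<open>refl_parity_wprod\<close>.\<close>
definition refl_parity :: "'a \<Rightarrow> 'a \<Rightarrow> bool" where
  "refl_parity x t = word_parity (SOME q. q \<in> lists S \<and> wprod G q = x) t"

lemma refl_parity_wprod:
  assumes "q \<in> lists S" "t \<in> carrier G"
  shows "refl_parity (wprod G q) t = word_parity q t"
proof -
  let ?q = "SOME q'. q' \<in> lists S \<and> wprod G q' = wprod G q"
  have "?q \<in> lists S \<and> wprod G ?q = wprod G q"
    by (rule someI[of _ q]) (use assms in auto)
  then have "word_cong (cox_relators G S) ?q q"
    using word_cong_if_wprod_eq assms by blast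
  then show ?thesis
    using word_cong_word_parity assms unfolding refl_parity_def by blast
qed

lemma refl_parity_mult:
  assumes "x \<in> carrier G" "y \<in> carrier G" "t \<in> carrier G"
  shows "refl_parity (x \<otimes> y) t \<longleftrightarrow> refl_parity x t \<noteq> refl_parity y (cnj (inv x) t)"
proof -
  obtain p q where "p \<in> lists S" "wprod G p = x" "q \<in> lists S" "wprod G q = y"
    using word_exists assms by metis
  then show ?thesis
    using assms word_parity_append[of p q t] refl_parity_wprod[of "p @ q" t]
      refl_parity_wprod[of p t] refl_parity_wprod[of q "cnj (inv x) t"]
    by (simp add: wprod_append)
qed

lemma refl_parity_one: "t \<in> carrier G \<Longrightarrow> \<not> refl_parity \<one> t"
  using refl_parity_wprod[of "[]" t] by simp

lemma refl_parity_gen: "s \<in> S \<Longrightarrow> t \<in> carrier G \<Longrightarrow> refl_parity s t \<longleftrightarrow> t = s"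
  using refl_parity_wprod[of "[s]" t] by (simp add: word_parity_gen)

abbreviation T where "T \<equiv> reflections G S"

lemma refl_iff: "t \<in> T \<longleftrightarrow> (\<exists>g\<in>carrier G. \<exists>s\<in>S. t = cnj g s)"
  unfolding reflections_def cnj_def by auto

lemma refl_closed: "t \<in> T \<Longrightarrow> t \<in> carrier G"
  using refl_iff by auto

lemma gen_refl: "s \<in> S \<Longrightarrow> s \<in> T"
  using refl_iff[of s] by (metis cnj_one gen_closed one_closed)

lemma cnj_refl: "t \<in> T \<Longrightarrow> g \<in> carrier G \<Longrightarrow> cnj g t \<in> T"
  using refl_iff by (metis cnj_cnj gen_closed m_closed)

lemma refl_square: "t \<in> T \<Longrightarrow> t \<otimes> t = \<one>"
  using refl_iff gen_gen_mult by (auto simp: cnj_def m_assoc)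

lemma refl_inv: "t \<in> T \<Longrightarrow> inv t = t"
  using refl_square refl_closed by (simp add: inv_equality)

lemma refl_refl_mult: "t \<in> T \<Longrightarrow> x \<in> carrier G \<Longrightarrow> t \<otimes> (t \<otimes> x) = x"
  using refl_square refl_closed by (simp add: m_assoc[symmetric])

lemma refl_parity_self:
  assumes "t \<in> T"
  shows "refl_parity t t"
proof -
  obtain g s where g: "g \<in> carrier G" "s \<in> S" "t = cnj g s"
    using assms refl_iff by auto
  have "cnj (inv (g \<otimes> s)) t = s"
    using g gen_inv gen_square by (simp add: cnj_def inv_mult_group m_assoc)
  moreover have "cnj (inv g) t = s"
    using g cnj_cnj[of "inv g" g s] by simp
  moreover have "t = (g \<otimes> s) \<otimes> inv g"
    using g by (simp add: cnj_def)
  ultimately show ?thesis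
    using g refl_parity_mult[of "g \<otimes> s" "inv g" t] refl_parity_mult[of g s t]
      refl_parity_mult[of g "inv g" t] refl_parity_gen[of s] refl_parity_one by simp
qed

lemma refl_parity_refl_mult:
  assumes "t \<in> T" "w \<in> carrier G"
  shows "refl_parity w t \<longleftrightarrow> \<not> refl_parity (t \<otimes> w) t"
proof -
  have "cnj (inv t) t = t"
    using assms refl_inv refl_square refl_closed by (simp add: cnj_def)
  then show ?thesis
    using assms refl_parity_self refl_parity_mult[of t "t \<otimes> w" t] refl_refl_mult refl_closed by simp
qed

lemma word_parity_exchange:
  assumes "q \<in> lists S" "word_parity q t"
  shows "\<exists>i<length q. t \<otimes> wprod G q = wprod G (del_nth i q)"
proof -
  have "t \<in> set (refl_seq q)"
    using assms(2) count_list_0_iff unfolding word_parity_def by (metis even_zero)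
  then obtain i where "i < length q" "refl_seq q ! i = t"
    by (auto simp: in_set_conv_nth)
  then show ?thesis
    using refl_seq_nth_mult[OF assms(1)] by blast
qed

lemma length_refl_mult_less_if_parity:
  assumes "t \<in> T" "w \<in> carrier G" "refl_parity w t"
  shows "\<ell> (t \<otimes> w) < \<ell> w"
proof -
  obtain q where q: "reduced_word G S q w"
    using reduced_word_exists assms by blast
  then have "word_parity q t"
    using assms refl_parity_wprod refl_closed unfolding reduced_word_def by auto
  then obtain i where "i < length q" "t \<otimes> w = wprod G (del_nth i q)"
    using word_parity_exchange q unfolding reduced_word_def by blast
  then show ?thesis
    using q length_le_word[OF del_nth_lists, of q i] length_del_nth unfolding reduced_word_def by force
qed

lemma length_refl_mult_less_iff:
  assumes t: "t \<in> T" and w: "w \<in> carrier G"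
  shows "\<ell> (t \<otimes> w) < \<ell> w \<longleftrightarrow> refl_parity w t"
proof
  assume less: "\<ell> (t \<otimes> w) < \<ell> w"
  show "refl_parity w t"
  proof (rule ccontr)
    assume "\<not> refl_parity w t"
    then have "refl_parity (t \<otimes> w) t"
      using refl_parity_refl_mult[OF t w] by simp
    then have "\<ell> (t \<otimes> (t \<otimes> w)) < \<ell> (t \<otimes> w)"
      using t w refl_closed length_refl_mult_less_if_parity by simp
    then show False
      using less t w refl_refl_mult by simp
  qed
qed (use t w length_refl_mult_less_if_parity in blast)

lemma length_refl_mult_neq:
  assumes t: "t \<in> T" and w: "w \<in> carrier G"
  shows "\<ell> (t \<otimes> w) \<noteq> \<ell> w"
proof
  assume eq: "\<ell> (t \<otimes> w) = \<ell> w"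
  have tw: "t \<otimes> w \<in> carrier G"
    using t w refl_closed by simp
  have "\<not> refl_parity w t"
    using eq length_refl_mult_less_iff[OF t w] by simp
  then have "refl_parity (t \<otimes> w) t"
    using refl_parity_refl_mult[OF t w] by simp
  then have "\<ell> (t \<otimes> (t \<otimes> w)) < \<ell> (t \<otimes> w)"
    using t tw length_refl_mult_less_if_parity by simp
  then show False
    using eq t w refl_refl_mult by simp
qed

theorem strong_exchange:
  assumes "q \<in> lists S" "t \<in> T" "\<ell> (t \<otimes> wprod G q) < \<ell> (wprod G q)"
  shows "\<exists>i<length q. t \<otimes> wprod G q = wprod G (del_nth i q)"
  using assms length_refl_mult_less_iff refl_parity_wprod refl_closed word_parity_exchange by simp

lemma refl_mult_eq_mult_cnj:
  assumes "t \<in> T" "x \<in> carrier G"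
  shows "x \<otimes> t = cnj x t \<otimes> x" "t \<otimes> x = x \<otimes> cnj (inv x) t"
  using assms refl_closed by (simp_all add: cnj_def m_assoc)

lemma length_mult_refl_neq: "t \<in> T \<Longrightarrow> x \<in> carrier G \<Longrightarrow> \<ell> (x \<otimes> t) \<noteq> \<ell> x"
  using length_refl_mult_neq cnj_refl refl_mult_eq_mult_cnj by metis

lemma strong_exchange_right:
  assumes "q \<in> lists S" "t \<in> T" "\<ell> (wprod G q \<otimes> t) < \<ell> (wprod G q)"
  shows "\<exists>i<length q. wprod G q \<otimes> t = wprod G (del_nth i q)"
  using assms strong_exchange[of q "cnj (wprod G q) t"] refl_mult_eq_mult_cnj(1)[of t "wprod G q"]
    cnj_refl[of t "wprod G q"] by simp

lemma length_gen_mult_cases: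
  "s \<in> S \<Longrightarrow> x \<in> carrier G \<Longrightarrow> \<ell> (s \<otimes> x) = \<ell> x + 1 \<or> \<ell> x = \<ell> (s \<otimes> x) + 1"
  using length_refl_mult_neq[OF gen_refl, of s x] length_gen_mult_le[of s x] length_le_gen_mult[of s x]
  by linarith

lemma length_mult_gen_cases:
  assumes "r \<in> S" "x \<in> carrier G"
  shows "\<ell> (x \<otimes> r) = \<ell> x + 1 \<or> \<ell> x = \<ell> (x \<otimes> r) + 1"
proof -
  have "\<ell> x \<le> \<ell> (x \<otimes> r) + \<ell> r"
    using assms length_mult_le[of "x \<otimes> r" r] gen_square by (simp add: m_assoc)
  moreover have "\<ell> (x \<otimes> r) \<le> \<ell> x + \<ell> r"
    using assms length_mult_le by simp
  ultimately show ?thesis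
    using assms length_mult_refl_neq[OF gen_refl, of r x] length_gen[of r] by linarith
qed

section \<open>Bruhat order: subword and lifting properties\<close>

abbreviation bruhat (infix "\<preceq>" 50) where "x \<preceq> y \<equiv> bruhat_le G S x y"

lemma bruhat_closed: "x \<preceq> y \<Longrightarrow> x \<in> carrier G \<and> y \<in> carrier G"
  unfolding bruhat_le_def by auto

lemma bruhat_refl: "x \<in> carrier G \<Longrightarrow> x \<preceq> x"
  unfolding bruhat_le_def by simp

lemma bruhat_trans: "x \<preceq> y \<Longrightarrow> y \<preceq> z \<Longrightarrow> x \<preceq> z"
  unfolding bruhat_le_def by auto

lemma bruhat_step_rtranclp_length:
  "(bruhat_step G S)\<^sup>*\<^sup>* u w \<Longrightarrow> \<ell> u \<le> \<ell> w \<and> (u \<noteq> w \<longrightarrow> \<ell> u < \<ell> w)"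
  by (induction rule: rtranclp_induct) (auto simp: bruhat_step_def)

lemma bruhat_length_le: "x \<preceq> y \<Longrightarrow> \<ell> x \<le> \<ell> y"
  unfolding bruhat_le_def using bruhat_step_rtranclp_length by blast

lemma bruhat_length_less: "x \<preceq> y \<Longrightarrow> x \<noteq> y \<Longrightarrow> \<ell> x < \<ell> y"
  unfolding bruhat_le_def using bruhat_step_rtranclp_length by blast

lemma bruhat_mult_refl: "t \<in> T \<Longrightarrow> x \<in> carrier G \<Longrightarrow> \<ell> x < \<ell> (x \<otimes> t) \<Longrightarrow> x \<preceq> x \<otimes> t"
  unfolding bruhat_le_def bruhat_step_def using refl_closed by (intro conjI r_into_rtranclp) auto

lemma bruhat_refl_mult: "t \<in> T \<Longrightarrow> x \<in> carrier G \<Longrightarrow> \<ell> x < \<ell> (t \<otimes> x) \<Longrightarrow> x \<preceq> t \<otimes> x"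
  using bruhat_mult_refl refl_mult_eq_mult_cnj(2) cnj_refl by (metis inv_closed)

lemma bruhat_gen_mult: "s \<in> S \<Longrightarrow> x \<in> carrier G \<Longrightarrow> \<ell> x < \<ell> (s \<otimes> x) \<Longrightarrow> x \<preceq> s \<otimes> x"
  using bruhat_refl_mult gen_refl by blast

lemma gen_mult_bruhat: "s \<in> S \<Longrightarrow> x \<in> carrier G \<Longrightarrow> \<ell> (s \<otimes> x) < \<ell> x \<Longrightarrow> s \<otimes> x \<preceq> x"
  using bruhat_gen_mult[of s "s \<otimes> x"] gen_gen_mult by simp

text \<open>Strong exchange in a reduced word \<open>r q\<close> of \<open>y\<close> deletes either the letter \<open>r\<close>, giving
  \<open>y t = r y\<close>, or a letter of \<open>q\<close>, which makes \<open>r y t\<close> a proper subword of \<open>q\<close>.\<close>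
lemma mult_refl_left_descent:
  assumes r: "r \<in> S" and t: "t \<in> T" and y: "y \<in> carrier G"
    and desc: "\<ell> (r \<otimes> y) < \<ell> y" and less: "\<ell> (y \<otimes> t) < \<ell> y"
  shows "y \<otimes> t = r \<otimes> y \<or> \<ell> (r \<otimes> (y \<otimes> t)) + 2 \<le> \<ell> y"
proof -
  obtain q where q: "q \<in> lists S" "wprod G q = r \<otimes> y" "length q = \<ell> (r \<otimes> y)"
    using reduced_word_exists r y unfolding reduced_word_def by (meson gen_closed m_closed)
  then have rq: "r # q \<in> lists S" "wprod G (r # q) = y"
    using r y gen_gen_mult by auto
  have "y \<otimes> t = cnj y t \<otimes> y"
    using refl_mult_eq_mult_cnj(1)[OF t y] .
  then obtain i where i: "i < length (r # q)" "y \<otimes> t = wprod G (del_nth i (r # q))"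
    using strong_exchange[OF rq(1) cnj_refl[OF t y]] rq less by auto
  show ?thesis
  proof (cases i)
    case 0
    then show ?thesis
      using i q by (simp add: del_nth_def)
  next
    case (Suc k)
    then have k: "k < length q" "y \<otimes> t = r \<otimes> wprod G (del_nth k q)"
      using i by (simp_all add: del_nth_def)
    have dq: "del_nth k q \<in> lists S"
      using del_nth_lists[OF q(1)] .
    then have "r \<otimes> (y \<otimes> t) = wprod G (del_nth k q)"
      using k(2) r gen_gen_mult by simp
    then have "\<ell> (r \<otimes> (y \<otimes> t)) \<le> length q - 1"
      using length_le_word[OF dq] length_del_nth[OF k(1)] by simp
    then show ?thesis
      using q(3) desc k(1) length_gen_mult_cases[OF r y] by linarith
  qed
qed

lemma bruhat_step_gen_mult:
  assumes step: "bruhat_step G S x y" and r: "r \<in> S"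
  shows "r \<otimes> x \<preceq> r \<otimes> y \<or> r \<otimes> x \<preceq> y"
proof -
  obtain t where t: "t \<in> T" "y = x \<otimes> t" and less: "\<ell> x < \<ell> y" and x: "x \<in> carrier G"
    using step unfolding bruhat_step_def by auto
  have y: "y \<in> carrier G"
    using x t refl_closed by simp
  have x_eq: "x = y \<otimes> t" and ry: "r \<otimes> y = (r \<otimes> x) \<otimes> t"
    using t x r refl_closed refl_square by (simp_all add: m_assoc)
  have "\<ell> (r \<otimes> y) \<noteq> \<ell> (r \<otimes> x)"
    using length_mult_refl_neq[OF t(1), of "r \<otimes> x"] x r ry by simp
  then consider "\<ell> (r \<otimes> x) < \<ell> (r \<otimes> y)" | "\<ell> (r \<otimes> x) < \<ell> x"
    | "\<ell> (r \<otimes> y) < \<ell> (r \<otimes> x)" "\<ell> x < \<ell> (r \<otimes> x)"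
    using length_gen_mult_cases[OF r x] by linarith
  then show ?thesis
  proof cases
    case 1
    then show ?thesis
      using bruhat_mult_refl[OF t(1), of "r \<otimes> x"] x r ry by simp
  next
    case 2
    have "r \<otimes> x \<preceq> x"
      using gen_mult_bruhat[OF r x 2] .
    moreover have "x \<preceq> y"
      using bruhat_mult_refl[OF t(1) x] t(2) less by simp
    ultimately show ?thesis
      by (blast intro: bruhat_trans)
  next
    case 3
    then have "\<ell> (r \<otimes> y) < \<ell> y" "\<ell> y = \<ell> x + 1"
      using length_gen_mult_cases[OF r x] length_gen_mult_cases[OF r y] less by auto
    then have "x = r \<otimes> y"
      using mult_refl_left_descent[OF r t(1) y] x_eq less 3 by fastforce
    then show ?thesis
      using bruhat_refl y r gen_gen_mult by simp
  qed
qed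

lemma bruhat_gen_mult_cases:
  assumes "u \<preceq> w" and r: "r \<in> S"
  shows "r \<otimes> u \<preceq> w \<or> r \<otimes> u \<preceq> r \<otimes> w"
proof -
  have w: "w \<in> carrier G"
    using assms(1) bruhat_closed by auto
  have "(bruhat_step G S)\<^sup>*\<^sup>* u w"
    using assms(1) unfolding bruhat_le_def by auto
  then show ?thesis
  proof (induction rule: converse_rtranclp_induct)
    case base
    then show ?case
      using bruhat_refl r w by simp
  next
    case (step u v)
    have "v \<in> carrier G"
      using step(1) refl_closed unfolding bruhat_step_def by auto
    then have "v \<preceq> w"
      using step(2) w unfolding bruhat_le_def by simp
    then show ?case
      using bruhat_step_gen_mult[OF step(1) r] step(3) bruhat_trans by blast
  qed
qed

lemma subword_bruhat:
  "reduced q \<Longrightarrow> subseq p q \<Longrightarrow> wprod G p \<preceq> wprod G q"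
proof (induction q arbitrary: p)
  case Nil
  then show ?case
    using list_emb_Nil2[OF Nil.prems(2)] bruhat_refl by simp
next
  case (Cons r q)
  have r: "r \<in> S" and q: "reduced q"
    using Cons.prems(1) reduced_Cons_reduced[OF Cons.prems(1)] unfolding reduced_word_def by auto
  have "\<ell> (wprod G q) < \<ell> (r \<otimes> wprod G q)"
    using Cons.prems(1) q unfolding reduced_word_def by simp
  then have up: "wprod G q \<preceq> wprod G (r # q)"
    using bruhat_gen_mult[OF r] q unfolding reduced_word_def by simp
  consider "subseq p q" | p' where "p = r # p'" "subseq p' q"
    using Cons.prems(2) by (cases p) (auto split: if_splits)
  then show ?case
  proof cases
    case 1
    then show ?thesis
      using Cons.IH[OF q 1] up by (blast intro: bruhat_trans)
  next
    case 2
    then have "wprod G p \<preceq> wprod G q \<or> wprod G p \<preceq> wprod G (r # q)"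
      using bruhat_gen_mult_cases[OF Cons.IH[OF q 2(2)] r] by simp
    then show ?thesis
      using up by (blast intro: bruhat_trans)
  qed
qed

theorem bruhat_subword:
  assumes "u \<preceq> w"
  shows "q \<in> lists S \<Longrightarrow> wprod G q = w \<Longrightarrow> \<exists>p. subseq p q \<and> wprod G p = u"
proof -
  have "(bruhat_step G S)\<^sup>*\<^sup>* u w"
    using assms unfolding bruhat_le_def by simp
  then show "q \<in> lists S \<Longrightarrow> wprod G q = w \<Longrightarrow> \<exists>p. subseq p q \<and> wprod G p = u"
  proof (induction arbitrary: q rule: rtranclp_induct)
    case base
    then show ?case
      by (intro exI[of _ q]) simp
  next
    case (step y z)
    obtain t where t: "t \<in> T" "z = y \<otimes> t" and less: "\<ell> y < \<ell> z" and y: "y \<in> carrier G"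
      using step(2) unfolding bruhat_step_def by auto
    have z: "z \<in> carrier G"
      using y t refl_closed by simp
    have "y = cnj z t \<otimes> z"
      using t y refl_closed refl_square by (simp add: cnj_def m_assoc)
    then obtain i where "y = wprod G (del_nth i q)"
      using strong_exchange[OF step.prems(1) cnj_refl[OF t(1) z]] step.prems(2) less by auto
    then obtain p where "subseq p (del_nth i q)" "wprod G p = u"
      using step.IH[OF del_nth_lists[OF step.prems(1)]] by blast
    then show ?case
      using subseq_del_nth subseq_order.trans by blast
  qed
qed

lemma one_bruhat: "x \<in> carrier G \<Longrightarrow> \<one> \<preceq> x"
proof -
  assume "x \<in> carrier G"
  then obtain q where "reduced q" "wprod G q = x"
    using reduced_exists by blast
  then show ?thesis
    using subword_bruhat[of q "[]"] by simp
qed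

lemma reduced_subword: "q \<in> lists S \<Longrightarrow> \<exists>p. subseq p q \<and> reduced p \<and> wprod G p = wprod G q"
proof (induction q)
  case Nil
  then show ?case
    by (auto simp: reduced_word_def)
next
  case (Cons r q)
  then have r: "r \<in> S" and q: "q \<in> lists S"
    by auto
  then obtain p where p: "subseq p q" "reduced p" "wprod G p = wprod G q"
    using Cons by blast
  show ?case
  proof (cases "\<ell> (r \<otimes> wprod G q) = \<ell> (wprod G q) + 1")
    case True
    then have "reduced (r # p)"
      using p r unfolding reduced_word_def by auto
    then show ?thesis
      using p by auto
  next
    case False
    then have l: "\<ell> (wprod G q) = \<ell> (r \<otimes> wprod G q) + 1"
      using length_gen_mult_cases[OF r wprod_closed[OF q]] by auto
    have pl: "p \<in> lists S"
      using p unfolding reduced_word_def by auto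
    then obtain i where i: "i < length p" "r \<otimes> wprod G p = wprod G (del_nth i p)"
      using strong_exchange[OF pl gen_refl[OF r]] l p by auto
    then have "reduced (del_nth i p)"
      using l p length_del_nth[OF i(1)] del_nth_lists[OF pl] unfolding reduced_word_def by auto
    moreover have "subseq (del_nth i p) (r # q)"
      using subseq_order.trans[OF subseq_del_nth p(1)] by (simp add: list_emb_Cons)
    ultimately show ?thesis
      using i p by auto
  qed
qed

lemma bruhat_descent_cases:
  assumes s: "s \<in> S" and w: "w \<in> carrier G" and desc: "\<ell> (s \<otimes> w) < \<ell> w" and x: "x \<preceq> w"
  shows "x \<preceq> s \<otimes> w \<or> s \<otimes> x \<preceq> s \<otimes> w"
proof -
  obtain q where q: "reduced q" "wprod G q = s \<otimes> w"
    using reduced_exists s w by (meson gen_closed m_closed)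
  have sq: "wprod G (s # q) = w"
    using q s w gen_gen_mult by simp
  have "reduced (s # q)"
    using q s sq length_gen_mult_cases[OF s w] desc unfolding reduced_word_def by auto
  then obtain p where p: "subseq p (s # q)" "wprod G p = x"
    using bruhat_subword[OF x, of "s # q"] sq unfolding reduced_word_def by blast
  consider "subseq p q" | p' where "p = s # p'" "subseq p' q"
    using p(1) by (cases p) (auto split: if_splits)
  then show ?thesis
  proof cases
    case 1
    then show ?thesis
      using subword_bruhat[OF q(1) 1] p q by simp
  next
    case 2
    have "p' \<in> lists S"
      using subseq_lists[OF 2(2)] q unfolding reduced_word_def by simp
    then have "s \<otimes> x = wprod G p'"
      using 2 p gen_gen_mult[OF s wprod_closed[OF \<open>p' \<in> lists S\<close>]] by simp
    then show ?thesis
      using subword_bruhat[OF q(1) 2(2)] q by simp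
  qed
qed

theorem lifting_property:
  assumes s: "s \<in> S" and x: "x \<preceq> w" and desc_w: "\<ell> (s \<otimes> w) < \<ell> w" and asc_x: "\<ell> x < \<ell> (s \<otimes> x)"
  shows "s \<otimes> x \<preceq> w \<and> x \<preceq> s \<otimes> w"
proof -
  have w: "w \<in> carrier G" and xc: "x \<in> carrier G"
    using x bruhat_closed by auto
  have sw: "s \<otimes> w \<preceq> w"
    using gen_mult_bruhat[OF s w desc_w] .
  consider "x \<preceq> s \<otimes> w" | "s \<otimes> x \<preceq> s \<otimes> w"
    using bruhat_descent_cases[OF s w desc_w x] by blast
  then show ?thesis
  proof cases
    case 1
    have "s \<otimes> x \<preceq> s \<otimes> w \<or> s \<otimes> x \<preceq> w"
      using bruhat_gen_mult_cases[OF 1 s] gen_gen_mult[OF s w] by simp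
    then show ?thesis
      using 1 sw by (blast intro: bruhat_trans)
  next
    case 2
    then show ?thesis
      using sw bruhat_gen_mult[OF s xc asc_x] bruhat_trans by blast
  qed
qed

lemma gen_mult_bruhat_both_desc:
  assumes s: "s \<in> S" and x: "x \<preceq> w" and "\<ell> (s \<otimes> w) < \<ell> w" "\<ell> (s \<otimes> x) < \<ell> x"
  shows "s \<otimes> x \<preceq> s \<otimes> w"
proof -
  have "s \<otimes> x \<preceq> x"
    using assms gen_mult_bruhat[OF s] bruhat_closed by blast
  then show ?thesis
    using assms bruhat_descent_cases[OF s _ _ x] bruhat_closed bruhat_trans by blast
qed

lemma gen_mult_bruhat_asc:
  assumes s: "s \<in> S" and x: "x \<preceq> w" and "\<ell> w < \<ell> (s \<otimes> w)"
  shows "s \<otimes> x \<preceq> s \<otimes> w"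
proof -
  have "w \<preceq> s \<otimes> w"
    using assms bruhat_gen_mult[OF s] bruhat_closed by blast
  then show ?thesis
    using bruhat_gen_mult_cases[OF x s] bruhat_trans by blast
qed

lemma gen_mult_cover:
  assumes s: "s \<in> S" and bd: "b \<preceq> d" "b \<noteq> d"
    and cover: "\<And>z. b \<preceq> z \<Longrightarrow> z \<preceq> d \<Longrightarrow> z = b \<or> z = d"
  shows "s \<otimes> b = d \<or> (s \<otimes> b \<preceq> s \<otimes> d \<and> s \<otimes> b \<noteq> s \<otimes> d)"
proof -
  have b: "b \<in> carrier G" and d: "d \<in> carrier G"
    using bd bruhat_closed by auto
  have neq: "s \<otimes> b \<noteq> s \<otimes> d"
    using bd b d s by simp
  consider "\<ell> (s \<otimes> b) < \<ell> b" "\<ell> (s \<otimes> d) < \<ell> d" | "\<ell> d < \<ell> (s \<otimes> d)"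
    | "\<ell> b < \<ell> (s \<otimes> b)" "\<ell> (s \<otimes> d) < \<ell> d"
    using length_refl_mult_neq[OF gen_refl[OF s] b] length_refl_mult_neq[OF gen_refl[OF s] d] by linarith
  then show ?thesis
  proof cases
    case 1
    then show ?thesis
      using gen_mult_bruhat_both_desc[OF s bd(1)] neq by blast
  next
    case 2
    then show ?thesis
      using gen_mult_bruhat_asc[OF s bd(1)] neq by blast
  next
    case 3
    then have "s \<otimes> b \<preceq> d" "b \<preceq> s \<otimes> b" "s \<otimes> b \<noteq> b"
      using lifting_property[OF s bd(1)] bruhat_gen_mult[OF s b] by auto
    then show ?thesis
      using cover by blast
  qed
qed

lemma bruhat_reduced_product_factors:
  assumes p: "p \<in> carrier G" and q: "q \<in> carrier G" and add: "\<ell> (p \<otimes> q) = \<ell> p + \<ell> q"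
    and x: "x \<preceq> p \<otimes> q"
  shows "\<exists>p' q'. p' \<preceq> p \<and> q' \<preceq> q \<and> x = p' \<otimes> q'"
proof -
  obtain a b where a: "reduced a" "wprod G a = p" and b: "reduced b" "wprod G b = q"
    using reduced_exists p q by metis
  then have ab: "reduced (a @ b)"
    using reduced_append add by simp
  obtain c where c: "subseq c (a @ b)" "wprod G c = x"
    using bruhat_subword[OF x, of "a @ b"] ab a b by (auto simp: wprod_append reduced_word_def)
  then obtain c1 c2 where c12: "c = c1 @ c2" "subseq c1 a" "subseq c2 b"
    by (auto elim: subseq_appendE)
  moreover have "c1 \<in> lists S" "c2 \<in> lists S"
    using subseq_lists[OF c12(2)] subseq_lists[OF c12(3)] a b unfolding reduced_word_def by simp_all
  ultimately show ?thesis
    using subword_bruhat[OF a(1)] subword_bruhat[OF b(1)] a b c by (auto simp: wprod_append)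
qed

lemma bruhat_reduced_product_mono:
  assumes add: "\<ell> (p \<otimes> q) = \<ell> p + \<ell> q" and pp: "p' \<preceq> p" and qq: "q' \<preceq> q"
  shows "p' \<otimes> q' \<preceq> p \<otimes> q"
proof -
  obtain a b where a: "reduced a" "wprod G a = p" and b: "reduced b" "wprod G b = q"
    using reduced_exists pp qq bruhat_closed by metis
  then have ab: "reduced (a @ b)"
    using reduced_append add by simp
  obtain c1 where c1: "subseq c1 a" "wprod G c1 = p'"
    using bruhat_subword[OF pp] a unfolding reduced_word_def by blast
  obtain c2 where c2: "subseq c2 b" "wprod G c2 = q'"
    using bruhat_subword[OF qq] b unfolding reduced_word_def by blast
  have "c1 \<in> lists S" "c2 \<in> lists S"
    using subseq_lists[OF c1(1)] subseq_lists[OF c2(1)] a b unfolding reduced_word_def by simp_all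
  then show ?thesis
    using subword_bruhat[OF ab list_emb_append_mono[OF c1(1) c2(1)]] a b c1 c2
    unfolding reduced_word_def by (simp add: wprod_append)
qed

section \<open>Support\<close>

lemma reduced_set_eq:
  assumes "reduced u"
  shows "set u = {s \<in> S. s \<preceq> wprod G u}"
proof
  have u: "u \<in> lists S"
    using assms unfolding reduced_word_def by simp
  show "set u \<subseteq> {s \<in> S. s \<preceq> wprod G u}"
  proof
    fix s
    assume s: "s \<in> set u"
    then have "s \<in> S"
      using u by auto
    moreover have "wprod G [s] \<preceq> wprod G u"
      using subword_bruhat[OF assms, of "[s]"] s by (simp add: subseq_singleton_left)
    ultimately show "s \<in> {s \<in> S. s \<preceq> wprod G u}"
      by simp
  qed
  show "{s \<in> S. s \<preceq> wprod G u} \<subseteq> set u"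
  proof
    fix s
    assume "s \<in> {s \<in> S. s \<preceq> wprod G u}"
    then have s: "s \<in> S" "s \<preceq> wprod G u"
      by auto
    obtain p where p: "subseq p u" "wprod G p = s"
      using bruhat_subword[OF s(2) u] by blast
    obtain p0 where p0: "subseq p0 p" "reduced p0" "wprod G p0 = s"
      using reduced_subword[OF subseq_lists[OF p(1) u]] p by auto
    then have "p0 = [s]"
      using length_gen[OF s(1)] unfolding reduced_word_def by (cases p0) auto
    then show "s \<in> set u"
      using p0(1) p(1) subseq_order.trans subseq_singleton_left by metis
  qed
qed

lemma supp_eq:
  assumes "x \<in> carrier G"
  shows "supp G S x = {s \<in> S. s \<preceq> x}"
proof -
  let ?u = "SOME u. reduced_word G S u x"
  have "reduced_word G S ?u x"
    using someI_ex[OF reduced_word_exists[OF assms]] .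
  then have "reduced ?u" "wprod G ?u = x"
    unfolding reduced_word_def by auto
  then show ?thesis
    using reduced_set_eq unfolding supp_def by simp
qed

lemma supp_reduced: "reduced u \<Longrightarrow> supp G S (wprod G u) = set u"
  using supp_eq reduced_set_eq unfolding reduced_word_def by simp

lemma supp_mono:
  assumes "x \<preceq> y"
  shows "supp G S x \<subseteq> supp G S y"
proof -
  have "{s \<in> S. s \<preceq> x} \<subseteq> {s \<in> S. s \<preceq> y}"
    using assms by (blast intro: bruhat_trans)
  then show ?thesis
    using assms supp_eq bruhat_closed by simp
qed

lemma left_descent_in_supp:
  assumes s: "s \<in> S" and x: "x \<in> carrier G" and desc: "\<ell> (s \<otimes> x) < \<ell> x"
  shows "s \<in> supp G S x"
proof -
  have "s \<preceq> x \<or> s \<preceq> s \<otimes> x"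
    using bruhat_gen_mult_cases[OF one_bruhat s] s x by simp
  then have "s \<preceq> x"
    using gen_mult_bruhat[OF s x desc] by (blast intro: bruhat_trans)
  then show ?thesis
    using supp_eq[OF x] s by simp
qed

lemma supp_subset_singleton:
  assumes x: "x \<in> carrier G" and sub: "supp G S x \<subseteq> {s}"
  shows "x = \<one> \<or> x = s"
proof -
  obtain u where u: "reduced u" "wprod G u = x"
    using reduced_exists x by blast
  have su: "set u \<subseteq> {s}"
    using supp_reduced[OF u(1)] u sub by simp
  show ?thesis
  proof (cases u)
    case Nil
    then show ?thesis
      using u by simp
  next
    case (Cons a u')
    show ?thesis
    proof (cases u')
      case Nil
      then show ?thesis
        using u su \<open>u = a # u'\<close> unfolding reduced_word_def by auto
    next
      case (Cons b u'')
      then have u'': "u = s # s # u''" "s \<in> S" "u'' \<in> lists S"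
        using u(1) su \<open>u = a # u'\<close> unfolding reduced_word_def by auto
      then have "x = wprod G u''"
        using u(2) gen_gen_mult[OF u''(2) wprod_closed[OF u''(3)]] by simp
      then show ?thesis
        using u u'' length_le_word[OF u''(3)] unfolding reduced_word_def by simp
    qed
  qed
qed

section \<open>Parabolic subgroups and minimal coset representatives\<close>

lemma parabolic_wprod: "u \<in> lists J \<Longrightarrow> wprod G u \<in> parabolic G J"
  unfolding parabolic_def by blast

lemma one_parabolic: "\<one> \<in> parabolic G J"
  using parabolic_wprod[of "[]"] by simp

lemma parabolic_iff_supp:
  assumes J: "J \<subseteq> S"
  shows "v \<in> parabolic G J \<longleftrightarrow> v \<in> carrier G \<and> supp G S v \<subseteq> J"
proof
  assume "v \<in> parabolic G J"
  then obtain u where u: "u \<in> lists J" "wprod G u = v"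
    unfolding parabolic_def by auto
  then have uS: "u \<in> lists S"
    using J by auto
  obtain p where p: "subseq p u" "reduced p" "wprod G p = v"
    using reduced_subword[OF uS] u by auto
  have "set p \<subseteq> J"
    using subseq_lists[OF p(1) u(1)] by auto
  then show "v \<in> carrier G \<and> supp G S v \<subseteq> J"
    using supp_reduced[OF p(2)] p u(2) wprod_closed[OF uS] by auto
next
  assume v: "v \<in> carrier G \<and> supp G S v \<subseteq> J"
  obtain u where u: "reduced u" "wprod G u = v"
    using reduced_exists v by blast
  then have "u \<in> lists J"
    using supp_reduced[OF u(1)] v by auto
  then show "v \<in> parabolic G J"
    using u parabolic_wprod by metis
qed

lemma parabolic_closed: "J \<subseteq> S \<Longrightarrow> v \<in> parabolic G J \<Longrightarrow> v \<in> carrier G"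
  using parabolic_iff_supp by blast

lemma gen_parabolic: "J \<subseteq> S \<Longrightarrow> s \<in> J \<Longrightarrow> s \<in> parabolic G J"
  using parabolic_wprod[of "[s]" J] by auto

lemma parabolic_mult:
  assumes J: "J \<subseteq> S" and "u \<in> parabolic G J" "v \<in> parabolic G J"
  shows "u \<otimes> v \<in> parabolic G J"
proof -
  obtain p q where "p \<in> lists J" "q \<in> lists J" "wprod G p = u" "wprod G q = v"
    using assms unfolding parabolic_def by auto
  moreover have "p \<in> lists S" "q \<in> lists S"
    using calculation J by auto
  ultimately show ?thesis
    using parabolic_wprod[of "p @ q" J] wprod_append[of p q] by simp
qed

lemma parabolic_inv:
  assumes J: "J \<subseteq> S" and "u \<in> parabolic G J"
  shows "inv u \<in> parabolic G J"
proof -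
  obtain p where "p \<in> lists J" "wprod G p = u"
    using assms unfolding parabolic_def by auto
  moreover have "p \<in> lists S" "rev p \<in> lists J"
    using calculation J by auto
  ultimately show ?thesis
    using parabolic_wprod[of "rev p" J] wprod_rev[of p] by simp
qed

lemma bruhat_parabolic:
  assumes J: "J \<subseteq> S" and "u \<preceq> v" "v \<in> parabolic G J"
  shows "u \<in> parabolic G J"
  using assms supp_mono bruhat_closed parabolic_iff_supp[OF J] by blast

definition minimal_rep :: "'a set \<Rightarrow> 'a \<Rightarrow> bool" where
  "minimal_rep J a \<longleftrightarrow> a \<in> carrier G \<and> (\<forall>v\<in>parabolic G J. \<ell> a \<le> \<ell> (a \<otimes> v))"

text \<open>Exchange \<open>r\<close> against a letter of \<open>a u\<close>: a letter of a reduced word of \<open>a\<close> would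
  give a shorter element of \<open>a W\<^sub>J\<close>, a letter of \<open>u\<close> would shorten the reduced word \<open>u r\<close>.\<close>
lemma minimal_rep_mult_word_ascent:
  assumes J: "J \<subseteq> S" and a: "minimal_rep J a" and ur: "reduced (u @ [r])" "set (u @ [r]) \<subseteq> J"
  shows "\<ell> (a \<otimes> wprod G u \<otimes> r) = \<ell> (a \<otimes> wprod G u) + 1"
proof (rule ccontr)
  have ac: "a \<in> carrier G"
    using a unfolding minimal_rep_def by simp
  have u: "u \<in> lists J" "u \<in> lists S" and r: "r \<in> J" "r \<in> S"
    using ur J unfolding reduced_word_def by auto
  let ?X = "a \<otimes> wprod G u"
  assume "\<ell> (?X \<otimes> r) \<noteq> \<ell> ?X + 1"
  moreover have "?X \<in> carrier G"
    using ac u by simp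
  ultimately have less: "\<ell> (?X \<otimes> r) < \<ell> ?X"
    using length_mult_gen_cases[OF r(2)] by fastforce
  obtain wa where wa: "reduced wa" "wprod G wa = a"
    using reduced_exists ac by blast
  then have wal: "wa \<in> lists S" "wa @ u \<in> lists S"
    using u unfolding reduced_word_def by auto
  then obtain i where i: "i < length (wa @ u)" "?X \<otimes> r = wprod G (del_nth i (wa @ u))"
    using strong_exchange_right[OF wal(2) gen_refl[OF r(2)]] less wa by (auto simp: wprod_append)
  show False
  proof (cases "i < length wa")
    case True
    let ?a' = "wprod G (del_nth i wa)" and ?v = "wprod G u \<otimes> r \<otimes> inv (wprod G u)"
    have a'l: "del_nth i wa \<in> lists S"
      using del_nth_lists wal by blast
    have closed: "?a' \<in> carrier G" "wprod G u \<in> carrier G"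
      using a'l u by simp_all
    have "a \<otimes> ?v = (?X \<otimes> r) \<otimes> inv (wprod G u)"
      using ac closed r by (simp add: m_assoc)
    also have "?X \<otimes> r = ?a' \<otimes> wprod G u"
      using i del_nth_append1[OF True] a'l u by (simp add: wprod_append)
    finally have "a \<otimes> ?v = ?a'"
      using closed by (simp add: m_assoc)
    moreover have "?v \<in> parabolic G J"
      using parabolic_wprod[OF u(1)] parabolic_mult[OF J] parabolic_inv[OF J] gen_parabolic[OF J r(1)]
      by blast
    moreover have "\<ell> ?a' < \<ell> a"
      using length_le_word[OF a'l] length_del_nth[OF True] wa True unfolding reduced_word_def by simp
    ultimately show False
      using a unfolding minimal_rep_def by (metis not_le)
  next
    case False
    let ?k = "i - length wa"
    have dl: "del_nth ?k u \<in> lists S"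
      using del_nth_lists u by blast
    have "?X \<otimes> r = a \<otimes> wprod G (del_nth ?k u)"
      using i del_nth_append2[of wa i u] False wal dl wa by (simp add: wprod_append)
    then have "wprod G (u @ [r]) = wprod G (del_nth ?k u)"
      using ac dl u r by (simp add: wprod_append m_assoc)
    then have "\<ell> (wprod G (u @ [r])) \<le> length u - 1"
      using length_le_word[OF dl] length_del_nth[of ?k u] i False by simp
    moreover have "\<ell> (wprod G (u @ [r])) = length u + 1"
      using ur(1) unfolding reduced_word_def by simp
    ultimately show False
      by linarith
  qed
qed

lemma minimal_rep_length_add_word:
  assumes J: "J \<subseteq> S" and a: "minimal_rep J a"
  shows "reduced u \<Longrightarrow> set u \<subseteq> J \<Longrightarrow> \<ell> (a \<otimes> wprod G u) = \<ell> a + length u"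
proof (induction u rule: rev_induct)
  case Nil
  then show ?case
    using a unfolding minimal_rep_def by simp
next
  case (snoc r u)
  have "reduced u" "u \<in> lists S" "r \<in> S" "a \<in> carrier G"
    using reduced_appendD(1)[OF snoc.prems(1)] snoc.prems J a unfolding minimal_rep_def by auto
  then show ?case
    using snoc minimal_rep_mult_word_ascent[OF J a snoc.prems] by (simp add: wprod_append m_assoc)
qed

lemma minimal_rep_length_add:
  assumes J: "J \<subseteq> S" and a: "minimal_rep J a" and v: "v \<in> parabolic G J"
  shows "\<ell> (a \<otimes> v) = \<ell> a + \<ell> v"
proof -
  obtain u where u: "reduced u" "wprod G u = v"
    using reduced_exists parabolic_closed[OF J v] by blast
  have "set u \<subseteq> J"
    using supp_reduced[OF u(1)] u parabolic_iff_supp[OF J] v by auto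
  then show ?thesis
    using minimal_rep_length_add_word[OF J a u(1)] u unfolding reduced_word_def by simp
qed

lemma minimal_rep_exists:
  assumes J: "J \<subseteq> S" and x: "x \<in> carrier G"
  shows "\<exists>a v. minimal_rep J a \<and> v \<in> parabolic G J \<and> x = a \<otimes> v"
proof -
  let ?P = "\<lambda>n. \<exists>v\<in>parabolic G J. \<ell> (x \<otimes> v) = n"
  obtain v0 where v0: "v0 \<in> parabolic G J" "\<ell> (x \<otimes> v0) = (LEAST n. ?P n)"
    using LeastI_ex[of ?P] one_parabolic by blast
  have v0c: "v0 \<in> carrier G"
    using parabolic_closed[OF J v0(1)] .
  have "minimal_rep J (x \<otimes> v0)"
    unfolding minimal_rep_def
  proof (intro conjI ballI)
    show "x \<otimes> v0 \<in> carrier G"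
      using x v0c by simp
    fix v
    assume v: "v \<in> parabolic G J"
    have "x \<otimes> v0 \<otimes> v = x \<otimes> (v0 \<otimes> v)"
      using x v0c parabolic_closed[OF J v] by (simp add: m_assoc)
    then have "?P (\<ell> (x \<otimes> v0 \<otimes> v))"
      using parabolic_mult[OF J v0(1) v] by metis
    then show "\<ell> (x \<otimes> v0) \<le> \<ell> (x \<otimes> v0 \<otimes> v)"
      using v0(2) Least_le[of ?P] by simp
  qed
  moreover have "x = (x \<otimes> v0) \<otimes> inv v0"
    using x v0c by (simp add: m_assoc)
  ultimately show ?thesis
    using parabolic_inv[OF J v0(1)] by blast
qed

lemma par_min_eq:
  assumes J: "J \<subseteq> S" and a: "minimal_rep J a" and v: "v \<in> parabolic G J"
  shows "par_min G S J (a \<otimes> v) = a"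
proof -
  have ac: "a \<in> carrier G" and vc: "v \<in> carrier G"
    using a parabolic_closed[OF J v] unfolding minimal_rep_def by auto
  let ?C = "{a \<otimes> v \<otimes> u | u. u \<in> parabolic G J}"
  have "a = a \<otimes> v \<otimes> inv v"
    using ac vc by (simp add: m_assoc)
  then have a_in: "a \<in> ?C"
    using parabolic_inv[OF J v] by blast
  have a_min: "\<ell> a < \<ell> z" if z: "z \<in> ?C" "z \<noteq> a" for z
  proof -
    obtain u where u: "u \<in> parabolic G J" "z = a \<otimes> v \<otimes> u"
      using z(1) by blast
    then have z_eq: "z = a \<otimes> (v \<otimes> u)" and vu: "v \<otimes> u \<in> parabolic G J"
      using ac vc parabolic_closed[OF J u(1)] parabolic_mult[OF J v u(1)] by (auto simp: m_assoc)
    then have "\<ell> (v \<otimes> u) \<noteq> 0"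
      using z(2) ac length_eq_0_iff[OF parabolic_closed[OF J vu]] by auto
    then show ?thesis
      using minimal_rep_length_add[OF J a vu] z_eq by simp
  qed
  show ?thesis
    unfolding par_min_def
  proof (rule the_equality)
    show "a \<in> ?C \<and> (\<forall>z\<in>?C. z \<noteq> a \<longrightarrow> \<ell> a < \<ell> z)"
      using a_in a_min by blast
  next
    fix y
    assume "y \<in> ?C \<and> (\<forall>z\<in>?C. z \<noteq> y \<longrightarrow> \<ell> y < \<ell> z)"
    then show "y = a"
      using a_in a_min by force
  qed
qed

lemma par_comp_eq:
  assumes J: "J \<subseteq> S" and a: "minimal_rep J a" and v: "v \<in> parabolic G J"
  shows "par_comp G S J (a \<otimes> v) = v"
  using a parabolic_closed[OF J v] unfolding par_comp_def par_min_eq[OF assms] minimal_rep_def by simp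

lemma par_decomp:
  assumes J: "J \<subseteq> S" and x: "x \<in> carrier G"
  shows "minimal_rep J (par_min G S J x)" "par_comp G S J x \<in> parabolic G J"
    "x = par_min G S J x \<otimes> par_comp G S J x"
  using minimal_rep_exists[OF assms] par_min_eq[OF J] par_comp_eq[OF J] by auto

lemma minimal_rep_bruhat_mono:
  assumes J: "J \<subseteq> S" and c: "minimal_rep J c" and v: "v \<in> parabolic G J"
    and "a \<preceq> c" "u \<preceq> v"
  shows "a \<otimes> u \<preceq> c \<otimes> v"
  using bruhat_reduced_product_mono[OF minimal_rep_length_add[OF J c v]] assms by simp

lemma minimal_rep_bruhat:
  assumes J: "J \<subseteq> S" and a: "minimal_rep J a" and v: "v \<in> parabolic G J"
  shows "a \<preceq> a \<otimes> v" "v \<preceq> a \<otimes> v"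
proof -
  have ac: "a \<in> carrier G" and vc: "v \<in> carrier G"
    using a parabolic_closed[OF J v] unfolding minimal_rep_def by auto
  show "a \<preceq> a \<otimes> v"
    using minimal_rep_bruhat_mono[OF J a v bruhat_refl[OF ac] one_bruhat[OF vc]] ac by simp
  show "v \<preceq> a \<otimes> v"
    using minimal_rep_bruhat_mono[OF J a v one_bruhat[OF ac] bruhat_refl[OF vc]] vc by simp
qed

lemma covers_in_if_length_Suc:
  assumes "u \<in> P" "v \<in> P" "u \<preceq> v" "\<ell> v = \<ell> u + 1"
  shows "covers_in (\<preceq>) P u v"
proof -
  have "\<not> (u \<preceq> z \<and> z \<preceq> v \<and> z \<noteq> u \<and> z \<noteq> v)" for z
  proof
    assume z: "u \<preceq> z \<and> z \<preceq> v \<and> z \<noteq> u \<and> z \<noteq> v"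
    then have "\<ell> u < \<ell> z" "\<ell> z < \<ell> v"
      using bruhat_length_less[of u z] bruhat_length_less[of z v] by auto
    then show False
      using assms(4) by simp
  qed
  then show ?thesis
    unfolding covers_in_def using assms by auto
qed

end

section \<open>Middle multiplication by the common letter\<close>

locale bp_single_overlap = coxeter +
  fixes J :: "'a set" and s w :: 'a
  assumes J: "J \<subseteq> S" and s: "s \<in> S" and w: "w \<in> carrier G"
    and BP: "BP_decomposition G S J w"
    and supp_inter: "supp G S (par_min G S J w) \<inter> supp G S (par_comp G S J w) = {s}"
begin

abbreviation minJ :: "'a \<Rightarrow> 'a" where "minJ x \<equiv> par_min G S J x"

abbreviation compJ :: "'a \<Rightarrow> 'a" where "compJ x \<equiv> par_comp G S J x"

abbreviation WJ :: "'a set" where "WJ \<equiv> parabolic G J"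

abbreviation phi :: "'a \<Rightarrow> 'a" where "phi x \<equiv> minJ x \<otimes> s \<otimes> compJ x"

abbreviation P :: "'a set" where "P \<equiv> bruhat_interval G S \<one> w"

lemma J_decomp:
  assumes "x \<in> carrier G"
  shows "minimal_rep J (minJ x)" "compJ x \<in> WJ" "x = minJ x \<otimes> compJ x"
  using par_decomp[OF J assms] by auto

lemma J_decomp_closed: "x \<in> carrier G \<Longrightarrow> minJ x \<in> carrier G \<and> compJ x \<in> carrier G"
  using J_decomp parabolic_closed[OF J] unfolding minimal_rep_def by blast

lemma J_decomp_eq:
  "minimal_rep J a \<Longrightarrow> v \<in> WJ \<Longrightarrow> minJ (a \<otimes> v) = a \<and> compJ (a \<otimes> v) = v"
  using par_min_eq[OF J] par_comp_eq[OF J] by blast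

lemma interval_iff: "x \<in> P \<longleftrightarrow> x \<preceq> w"
  unfolding bruhat_interval_def using one_bruhat bruhat_closed by blast

lemma s_in_J: "s \<in> J"
  using supp_inter J_decomp(2)[OF w] parabolic_iff_supp[OF J] by blast

lemma s_parabolic: "s \<in> WJ"
  using gen_parabolic[OF J s_in_J] .

lemma s_left_descent: "\<ell> (s \<otimes> compJ w) < \<ell> (compJ w)"
  using BP supp_inter s_in_J unfolding BP_decomposition_def left_descents_def by auto

lemma supp_min_inter_J: "supp G S (minJ w) \<inter> J \<subseteq> {s}"
proof
  fix r
  assume r: "r \<in> supp G S (minJ w) \<inter> J"
  then have "r \<in> S" "\<ell> (r \<otimes> compJ w) < \<ell> (compJ w)"
    using BP unfolding BP_decomposition_def left_descents_def by auto
  then have "r \<in> supp G S (compJ w)"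
    using left_descent_in_supp J_decomp_closed[OF w] by blast
  then show "r \<in> {s}"
    using r supp_inter by auto
qed

lemma parabolic_below_min:
  assumes "e \<preceq> minJ w" "e \<in> WJ"
  shows "e = \<one> \<or> e = s"
proof -
  have "supp G S e \<subseteq> {s}"
    using supp_mono[OF assms(1)] assms(2) parabolic_iff_supp[OF J] supp_min_inter_J by blast
  then show ?thesis
    using supp_subset_singleton parabolic_closed[OF J assms(2)] by blast
qed

lemma gen_mult_below_comp:
  assumes "q \<preceq> compJ w"
  shows "s \<otimes> q \<preceq> compJ w"
proof -
  have q: "q \<in> carrier G"
    using assms bruhat_closed by blast
  consider "\<ell> (s \<otimes> q) < \<ell> q" | "\<ell> q < \<ell> (s \<otimes> q)"
    using length_refl_mult_neq[OF gen_refl[OF s] q] by linarith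
  then show ?thesis
  proof cases
    case 1
    show ?thesis
      by (rule bruhat_trans[OF gen_mult_bruhat[OF s q 1] assms])
  next
    case 2
    then show ?thesis
      using lifting_property[OF s assms s_left_descent] by blast
  qed
qed

lemma bruhat_below_cases:
  assumes xy: "x \<preceq> y" and y: "minJ y \<preceq> minJ w"
  obtains d' where "d' \<preceq> compJ y" "minJ x \<preceq> minJ y" "compJ x = d'"
    | d' where "d' \<preceq> compJ y" "minJ x \<otimes> s \<preceq> minJ y" "compJ x = s \<otimes> d'"
proof -
  have yc: "y \<in> carrier G"
    using xy bruhat_closed by blast
  note Dy = J_decomp[OF yc]
  obtain c' d' where cd: "c' \<preceq> minJ y" "d' \<preceq> compJ y" "x = c' \<otimes> d'"
    using bruhat_reduced_product_factors[OF _ _ minimal_rep_length_add[OF J Dy(1,2)]] xy Dy(3)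
      J_decomp_closed[OF yc] by metis
  have d': "d' \<in> WJ" "d' \<in> carrier G"
    using bruhat_parabolic[OF J cd(2) Dy(2)] parabolic_closed[OF J] by auto
  have c': "c' \<in> carrier G"
    using cd(1) bruhat_closed by blast
  note Dc = J_decomp[OF c']
  have "compJ c' \<preceq> minJ w"
    using minimal_rep_bruhat(2)[OF J Dc(1,2)] Dc(3) cd(1) y by (metis bruhat_trans)
  then have e: "compJ c' = \<one> \<or> compJ c' = s"
    using parabolic_below_min Dc(2) by blast
  have "x = minJ c' \<otimes> (compJ c' \<otimes> d')"
    using cd(3) Dc(3) J_decomp_closed[OF c'] d' by (metis m_assoc)
  then have x: "minJ x = minJ c'" "compJ x = compJ c' \<otimes> d'"
    using J_decomp_eq[OF Dc(1) parabolic_mult[OF J Dc(2) d'(1)]] by auto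
  from e show thesis
  proof
    assume "compJ c' = \<one>"
    then show thesis
      using that(1)[OF cd(2)] x Dc(3) cd(1) d' J_decomp_closed[OF c'] by simp
  next
    assume "compJ c' = s"
    then show thesis
      using that(2)[OF cd(2)] x Dc(3) cd(1) by simp
  qed
qed

lemma interval_projection:
  assumes "y \<preceq> w"
  shows "minJ y \<preceq> minJ w" "compJ y \<preceq> compJ w"
proof -
  have "minJ w \<preceq> minJ w"
    using bruhat_refl J_decomp_closed[OF w] by blast
  then have "minJ y \<preceq> minJ w \<and> compJ y \<preceq> compJ w"
  proof (rule bruhat_below_cases[OF assms])
    fix d'
    assume "d' \<preceq> compJ w" "minJ y \<preceq> minJ w" "compJ y = d'"
    then show ?thesis
      by simp
  next
    fix d'
    assume d': "d' \<preceq> compJ w" "minJ y \<otimes> s \<preceq> minJ w" "compJ y = s \<otimes> d'"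
    have "minJ y \<preceq> minJ y \<otimes> s"
      using minimal_rep_bruhat(1)[OF J J_decomp(1) s_parabolic] assms bruhat_closed by blast
    then show ?thesis
      using bruhat_trans[OF _ d'(2)] gen_mult_below_comp[OF d'(1)] d'(3) by simp
  qed
  then show "minJ y \<preceq> minJ w" "compJ y \<preceq> compJ w"
    by auto
qed

lemma phi_eq: "x \<in> carrier G \<Longrightarrow> phi x = minJ x \<otimes> (s \<otimes> compJ x)"
  using J_decomp_closed s by (simp add: m_assoc)

lemma J_decomp_phi:
  assumes "x \<in> carrier G"
  shows "minJ (phi x) = minJ x" "compJ (phi x) = s \<otimes> compJ x"
  using J_decomp_eq[OF J_decomp(1)[OF assms] parabolic_mult[OF J s_parabolic J_decomp(2)[OF assms]]]
    phi_eq[OF assms] by auto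

lemma phi_closed: "x \<in> carrier G \<Longrightarrow> phi x \<in> carrier G"
  using J_decomp_closed s by simp

lemma phi_phi:
  assumes "x \<in> carrier G"
  shows "phi (phi x) = x"
proof -
  have "phi (phi x) = minJ x \<otimes> (s \<otimes> (s \<otimes> compJ x))"
    using phi_eq[OF phi_closed[OF assms]] J_decomp_phi[OF assms] by simp
  also have "\<dots> = x"
    using gen_gen_mult[OF s] J_decomp_closed[OF assms] J_decomp(3)[OF assms] by simp
  finally show ?thesis .
qed

lemma phi_neq:
  assumes "x \<in> carrier G"
  shows "phi x \<noteq> x"
proof
  assume "phi x = x"
  then have "minJ x \<otimes> (s \<otimes> compJ x) = minJ x \<otimes> compJ x"
    using phi_eq[OF assms] J_decomp(3)[OF assms] by simp
  then have "s = \<one>"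
    using J_decomp_closed[OF assms] s by simp
  then show False
    using s one_not_gen by simp
qed

lemma phi_adjacent:
  assumes x: "x \<in> carrier G"
  shows "phi x \<preceq> x \<and> \<ell> x = \<ell> (phi x) + 1 \<or> x \<preceq> phi x \<and> \<ell> (phi x) = \<ell> x + 1"
proof -
  note D = J_decomp[OF x]
  let ?a = "minJ x" and ?b = "compJ x"
  have ab: "?a \<in> carrier G" "?b \<in> carrier G"
    using J_decomp_closed[OF x] by auto
  have sb: "s \<otimes> ?b \<in> WJ"
    using parabolic_mult[OF J s_parabolic D(2)] .
  have lengths: "\<ell> x = \<ell> ?a + \<ell> ?b" "\<ell> (phi x) = \<ell> ?a + \<ell> (s \<otimes> ?b)"
    using minimal_rep_length_add[OF J D(1) D(2)] minimal_rep_length_add[OF J D(1) sb] D(3) phi_eq[OF x]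
    by auto
  consider "\<ell> (s \<otimes> ?b) < \<ell> ?b" "\<ell> ?b = \<ell> (s \<otimes> ?b) + 1"
    | "\<ell> ?b < \<ell> (s \<otimes> ?b)" "\<ell> (s \<otimes> ?b) = \<ell> ?b + 1"
    using length_gen_mult_cases[OF s ab(2)] by linarith
  then show ?thesis
  proof cases
    case 1
    then have "phi x \<preceq> x"
      using minimal_rep_bruhat_mono[OF J D(1,2) bruhat_refl[OF ab(1)] gen_mult_bruhat[OF s ab(2) 1(1)]]
        phi_eq[OF x] D(3) by simp
    then show ?thesis
      using lengths 1 by simp
  next
    case 2
    then have "x \<preceq> phi x"
      using minimal_rep_bruhat_mono[OF J D(1) sb bruhat_refl[OF ab(1)] bruhat_gen_mult[OF s ab(2) 2(1)]]
        phi_eq[OF x] D(3) by simp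
    then show ?thesis
      using lengths 2 by simp
  qed
qed

lemma phi_in_interval:
  assumes "x \<in> P"
  shows "phi x \<in> P"
proof -
  have xw: "x \<preceq> w"
    using assms interval_iff by blast
  then have "phi x \<preceq> minJ w \<otimes> compJ w"
    using bruhat_reduced_product_mono[OF minimal_rep_length_add[OF J J_decomp(1,2)[OF w]]
        interval_projection(1)[OF xw] gen_mult_below_comp[OF interval_projection(2)[OF xw]]]
      phi_eq bruhat_closed by simp
  then show ?thesis
    using interval_iff J_decomp(3)[OF w] by simp
qed

lemma phi_perfect_matching: "perfect_matching (\<preceq>) P phi"
  unfolding perfect_matching_def
proof
  fix x
  assume x: "x \<in> P"
  then have "x \<in> carrier G"
    using interval_iff bruhat_closed by blast
  then show "phi x \<in> P \<and> phi (phi x) = x \<and> phi x \<noteq> x \<and>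
      (covers_in (\<preceq>) P x (phi x) \<or> covers_in (\<preceq>) P (phi x) x)"
    using phi_in_interval[OF x] phi_adjacent phi_phi phi_neq
      covers_in_if_length_Suc[OF x] covers_in_if_length_Suc[OF _ x] by blast
qed

lemma cover_other_coset_between:
  assumes cover: "covers_in (\<preceq>) P x y" and ne: "minJ x \<noteq> minJ y"
    and u: "u \<in> WJ" "x \<preceq> minJ x \<otimes> u" "minJ x \<otimes> u \<preceq> y"
  shows "u = compJ x"
proof -
  have x: "x \<in> carrier G" and y: "y \<preceq> w"
    using cover interval_iff bruhat_closed unfolding covers_in_def by blast+
  have "minJ x \<otimes> u \<in> P"
    using bruhat_trans[OF u(3) y] interval_iff by blast
  then have "minJ x \<otimes> u = x \<or> minJ x \<otimes> u = y"
    using cover u(2,3) unfolding covers_in_def by blast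
  moreover have "minJ (minJ x \<otimes> u) = minJ x"
    using J_decomp_eq[OF J_decomp(1)[OF x] u(1)] by simp
  ultimately have "minJ x \<otimes> u = minJ x \<otimes> compJ x"
    using ne J_decomp(3)[OF x] by metis
  then show ?thesis
    using J_decomp_closed[OF x] parabolic_closed[OF J u(1)] by simp
qed

lemma cover_same_coset_comp:
  assumes cover: "covers_in (\<preceq>) P x y" and eq: "minJ x = minJ y"
  shows "compJ x \<preceq> compJ y" "compJ x \<noteq> compJ y"
    "\<And>z. compJ x \<preceq> z \<Longrightarrow> z \<preceq> compJ y \<Longrightarrow> z = compJ x \<or> z = compJ y"
proof -
  have xy: "x \<preceq> y" "x \<noteq> y" and yw: "y \<preceq> w"
    using cover interval_iff unfolding covers_in_def by auto
  have x: "x \<in> carrier G" and y: "y \<in> carrier G"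
    using xy bruhat_closed by auto
  let ?a = "minJ x" and ?b = "compJ x" and ?d = "compJ y"
  note Dx = J_decomp[OF x] and Dy = J_decomp[OF y]
  have closed: "?a \<in> carrier G" "?b \<in> carrier G" "?d \<in> carrier G"
    using J_decomp_closed x y by auto
  show "?b \<preceq> ?d"
  proof (rule bruhat_below_cases[OF xy(1) interval_projection(1)[OF yw]])
    fix d'
    assume "d' \<preceq> compJ y" "minJ x \<otimes> s \<preceq> minJ y" "compJ x = s \<otimes> d'"
    then have "\<ell> (?a \<otimes> s) \<le> \<ell> ?a"
      using eq bruhat_length_le by simp
    then show "?b \<preceq> ?d"
      using minimal_rep_length_add[OF J Dx(1) s_parabolic] length_gen[OF s] by simp
  qed simp
  show "?b \<noteq> ?d"
    using xy(2) Dx(3) Dy(3) eq by metis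
  fix z
  assume z: "?b \<preceq> z" "z \<preceq> ?d"
  have zc: "z \<in> WJ" "z \<in> carrier G"
    using bruhat_parabolic[OF J z(2) Dy(2)] parabolic_closed[OF J] by auto
  have "x \<preceq> ?a \<otimes> z" "?a \<otimes> z \<preceq> y"
    using minimal_rep_bruhat_mono[OF J Dx(1) zc(1) bruhat_refl[OF closed(1)] z(1)]
      minimal_rep_bruhat_mono[OF J Dx(1) Dy(2) bruhat_refl[OF closed(1)] z(2)] Dx(3) Dy(3) eq
    by simp_all
  then have "?a \<otimes> z = ?a \<otimes> ?b \<or> ?a \<otimes> z = ?a \<otimes> ?d"
    using cover interval_iff bruhat_trans[OF _ yw] Dx(3) Dy(3) eq unfolding covers_in_def by metis
  then show "z = ?b \<or> z = ?d"
    using closed zc by simp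
qed

lemma special_same_coset:
  assumes cover: "covers_in (\<preceq>) P x y" and eq: "minJ x = minJ y"
  shows "phi x = y \<or> (phi x \<preceq> phi y \<and> phi x \<noteq> phi y)"
proof -
  have x: "x \<in> carrier G" and y: "y \<in> carrier G"
    using cover interval_iff bruhat_closed unfolding covers_in_def by blast+
  note Dx = J_decomp[OF x] and Dy = J_decomp[OF y]
  have closed: "minJ x \<in> carrier G" "compJ x \<in> carrier G" "compJ y \<in> carrier G"
    using J_decomp_closed x y by auto
  from gen_mult_cover[OF s cover_same_coset_comp[OF cover eq]]
  show ?thesis
  proof
    assume "s \<otimes> compJ x = compJ y"
    then show ?thesis
      using phi_eq[OF x] Dy(3) eq by simp
  next
    assume "s \<otimes> compJ x \<preceq> s \<otimes> compJ y \<and> s \<otimes> compJ x \<noteq> s \<otimes> compJ y"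
    then show ?thesis
      using minimal_rep_bruhat_mono[OF J Dx(1) parabolic_mult[OF J s_parabolic Dy(2)] bruhat_refl[OF closed(1)]]
        phi_eq[OF x] phi_eq[OF y] eq closed s by simp
  qed
qed

lemma special_other_coset_same_comp:
  assumes cover: "covers_in (\<preceq>) P x y" and ne: "minJ x \<noteq> minJ y"
    and below: "compJ x \<preceq> compJ y" "minJ x \<preceq> minJ y"
  shows "phi x \<preceq> phi y"
proof -
  have x: "x \<in> carrier G" and y: "y \<in> carrier G"
    using cover interval_iff bruhat_closed unfolding covers_in_def by blast+
  note Dx = J_decomp[OF x] and Dy = J_decomp[OF y]
  have closed: "minJ x \<in> carrier G" "compJ y \<in> carrier G"
    using J_decomp_closed x y by auto
  show ?thesis
  proof (cases "compJ x = compJ y")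
    case True
    then show ?thesis
      using minimal_rep_bruhat_mono[OF J Dy(1) parabolic_mult[OF J s_parabolic Dy(2)] below(2)
          bruhat_refl] phi_eq[OF x] phi_eq[OF y] closed s by simp
  next
    case False
    have "x \<preceq> minJ x \<otimes> compJ y" "minJ x \<otimes> compJ y \<preceq> y"
      using minimal_rep_bruhat_mono[OF J Dx(1) Dy(2) bruhat_refl[OF closed(1)] below(1)]
        minimal_rep_bruhat_mono[OF J Dy(1) Dy(2) below(2) bruhat_refl[OF closed(2)]] Dx(3) Dy(3)
      by simp_all
    then show ?thesis
      using cover_other_coset_between[OF cover ne Dy(2)] False by simp
  qed
qed

lemma special_other_coset_shifted_comp:
  assumes cover: "covers_in (\<preceq>) P x y" and ne: "minJ x \<noteq> minJ y"
    and d': "d' \<preceq> compJ y" "minJ x \<otimes> s \<preceq> minJ y" "compJ x = s \<otimes> d'"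
  shows "phi x \<preceq> phi y"
proof -
  have x: "x \<in> carrier G" and y: "y \<in> carrier G"
    using cover interval_iff bruhat_closed unfolding covers_in_def by blast+
  let ?a = "minJ x" and ?c = "minJ y" and ?d = "compJ y"
  note Dx = J_decomp[OF x] and Dy = J_decomp[OF y]
  have closed: "?a \<in> carrier G" "?d \<in> carrier G"
    using J_decomp_closed x y by auto
  have d'c: "d' \<in> WJ" "d' \<in> carrier G"
    using bruhat_parabolic[OF J d'(1) Dy(2)] parabolic_closed[OF J] by auto
  have ac: "?a \<preceq> ?c"
    using minimal_rep_bruhat(1)[OF J Dx(1) s_parabolic] d'(2) by (rule bruhat_trans)
  have "d' \<preceq> s \<otimes> ?d"
  proof -
    consider "\<ell> ?d < \<ell> (s \<otimes> ?d)" | "\<ell> (s \<otimes> ?d) < \<ell> ?d" "\<ell> d' < \<ell> (s \<otimes> d')"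
      | "\<ell> (s \<otimes> d') < \<ell> d'"
      using length_refl_mult_neq[OF gen_refl[OF s] closed(2)] length_refl_mult_neq[OF gen_refl[OF s] d'c(2)]
      by linarith
    then show ?thesis
    proof cases
      case 1
      then show ?thesis
        using bruhat_trans[OF d'(1) bruhat_gen_mult[OF s closed(2)]] by blast
    next
      case 2
      then show ?thesis
        using lifting_property[OF s d'(1)] by blast
    next
      case 3
      text \<open>Then \<open>x\<^sup>J d'\<close> would lie strictly between \<open>x\<close> and \<open>y\<close>.\<close>
      have "x \<preceq> ?a \<otimes> d'" "?a \<otimes> d' \<preceq> y"
        using minimal_rep_bruhat_mono[OF J Dx(1) d'c(1) bruhat_refl[OF closed(1)] gen_mult_bruhat[OF s d'c(2) 3]]
          minimal_rep_bruhat_mono[OF J Dy(1) Dy(2) ac d'(1)] Dx(3) Dy(3) d'(3)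
        by simp_all
      then have "d' = s \<otimes> d'"
        using cover_other_coset_between[OF cover ne d'c(1)] d'(3) by simp
      then show ?thesis
        using s one_not_gen d'c(2) by (metis gen_closed r_cancel_one')
    qed
  qed
  moreover have "phi x = ?a \<otimes> d'"
    using phi_eq[OF x] d'(3) gen_gen_mult[OF s d'c(2)] by simp
  ultimately show ?thesis
    using minimal_rep_bruhat_mono[OF J Dy(1) parabolic_mult[OF J s_parabolic Dy(2)] ac] phi_eq[OF y]
    by simp
qed

lemma special_other_coset:
  assumes cover: "covers_in (\<preceq>) P x y" and ne: "minJ x \<noteq> minJ y"
  shows "phi x \<preceq> phi y"
proof -
  have "x \<preceq> y" "y \<preceq> w"
    using cover interval_iff unfolding covers_in_def by auto
  then show ?thesis
  proof (rule bruhat_below_cases[OF _ interval_projection(1)])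
    fix d'
    assume "d' \<preceq> compJ y" "minJ x \<preceq> minJ y" "compJ x = d'"
    then show ?thesis
      using special_other_coset_same_comp[OF cover ne] by simp
  next
    fix d'
    assume "d' \<preceq> compJ y" "minJ x \<otimes> s \<preceq> minJ y" "compJ x = s \<otimes> d'"
    then show ?thesis
      using special_other_coset_shifted_comp[OF cover ne] by blast
  qed
qed

theorem phi_special_matching: "special_matching (\<preceq>) P phi"
  unfolding special_matching_def
proof (intro conjI allI impI)
  show "perfect_matching (\<preceq>) P phi"
    by (rule phi_perfect_matching)
  fix x y
  assume cover: "covers_in (\<preceq>) P x y"
  then have "x \<in> carrier G" "y \<in> carrier G"
    using interval_iff bruhat_closed unfolding covers_in_def by blast+
  then show "phi x = y \<or> (phi x \<preceq> phi y \<and> phi x \<noteq> phi y)"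
    using special_same_coset[OF cover] special_other_coset[OF cover] J_decomp_phi by metis
qed

end

theorem proposition6p1:
  fixes G :: "('a, 'b) monoid_scheme" and S J :: "'a set" and w s :: 'a
  assumes "coxeter_system G S"
    and "w \<in> carrier G"
    and "J \<subseteq> S"
    and "s \<in> S"
    and "BP_decomposition G S J w"
    and "supp G S (par_min G S J w) \<inter> supp G S (par_comp G S J w) = {s}"
  shows "special_matching (bruhat_le G S) (bruhat_interval G S \<one>\<^bsub>G\<^esub> w)
           (\<lambda>x. par_min G S J x \<otimes>\<^bsub>G\<^esub> s \<otimes>\<^bsub>G\<^esub> par_comp G S J x)"
proof -
  interpret bp_single_overlap G S J s w
    using assms by unfold_locales (simp_all add: coxeter_def)
  show ?thesis
    by (rule phi_special_matching)
qed

end
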